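(* $\mathfrak{L}(\mathbf{F}_2)^w_{O(n)} = \mathsf{CF}$.
   Context: For a group $G$ with identity $e$, a $G$-automaton is a tuple $(Q,\Sigma,G,\delta,q_0,Q_a)$ where $Q$ is a finite set of states, $\Sigma$ a finite input alphabet, $q_0\in Q$ the initial state, $Q_a\subseteq Q$ the accepting states, and $\delta$ assigns to each $(q,\sigma)\in Q\times(\Sigma\cup\{\varepsilon\})$ a finite set of pairs $(q',m)\in Q\times G$. The register holds an element of $G$, initially $e$; using a transition $(q',m)\in\delta(q,\sigma)$ (one step) the automaton reads $\sigma$ (or nothing), moves to $q'$ and replaces the register content $x$ by $xm$. A word is accepted if some computation reads it entirely and ends in an accepting state with register equal to $e$. A $G$-automaton recognizing $\mathtt{L}$ is weakly $t(n)$ time-bounded if every $x\in\mathtt{L}$ with $|x|=n$ has an accepting computation of at most $t(n)$ steps; $\mathfrak{L}(G)^w_{O(n)}$ is the class of languages recognized by weakly $t(n)$ time-bounded $G$-automata for some $t(n)=O(n)$. $\mathbf{F}_2$ is the free group of rank 2; $\mathsf{CF}$ is the class of context-free languages. *)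

theory Defs
  imports "HOL-Algebra.Group" "HOL-Library.Landau_Symbols"
begin

text \<open>Letters are pairs (generator, inverted?): generator False = a, True = b;
  second component True means the inverse letter.\<close>

type_synonym f2_letter = "bool \<times> bool"

definition cancels :: "f2_letter \<Rightarrow> f2_letter \<Rightarrow> bool" where
  "cancels x y \<longleftrightarrow> fst x = fst y \<and> snd x \<noteq> snd y"

definition reduced :: "f2_letter list \<Rightarrow> bool" where
  "reduced w \<longleftrightarrow> (\<forall>i. Suc i < length w \<longrightarrow> \<not> cancels (w ! i) (w ! Suc i))"

fun reduce :: "f2_letter list \<Rightarrow> f2_letter list" where
  "reduce [] = []"
| "reduce (x # w) = (case reduce w of
       [] \<Rightarrow> [x]
     | (y # r) \<Rightarrow> (if cancels x y then r else x # y # r))"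

definition F2 :: "f2_letter list monoid" where
  "F2 = \<lparr>carrier = {w. reduced w}, mult = (\<lambda>x y. reduce (x @ y)), one = []\<rparr>"

text \<open>Transitions labelled by None are epsilon-transitions.\<close>

record ('q, 'a, 'g) gaut =
  states :: "'q set"
  alphabet :: "'a set"
  init :: 'q
  acc :: "'q set"
  delta :: "'q \<Rightarrow> 'a option \<Rightarrow> ('q \<times> 'g) set"

definition wf_gaut :: "('g, 'm) monoid_scheme \<Rightarrow> ('q, 'a, 'g) gaut \<Rightarrow> bool" where
  "wf_gaut G A \<longleftrightarrow> finite (states A) \<and> finite (alphabet A) \<and> init A \<in> states A
     \<and> acc A \<subseteq> states A
     \<and> (\<forall>q s. (q \<in> states A \<and> (s = None \<or> (\<exists>a \<in> alphabet A. s = Some a)))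
            \<longrightarrow> finite (delta A q s) \<and> delta A q s \<subseteq> states A \<times> carrier G)
     \<and> (\<forall>q s. \<not> (q \<in> states A \<and> (s = None \<or> (\<exists>a \<in> alphabet A. s = Some a)))
            \<longrightarrow> delta A q s = {})"

inductive comp :: "('g, 'm) monoid_scheme \<Rightarrow> ('q, 'a, 'g) gaut \<Rightarrow> 'q \<Rightarrow> 'a list \<Rightarrow> 'g \<Rightarrow> nat
                     \<Rightarrow> 'q \<Rightarrow> 'g \<Rightarrow> bool"
  for G A where
  stop: "comp G A q [] x 0 q x"
| read: "(q1, m) \<in> delta A q (Some a) \<Longrightarrow> comp G A q1 w (x \<otimes>\<^bsub>G\<^esub> m) k q' x'
          \<Longrightarrow> comp G A q (a # w) x (Suc k) q' x'"
| eps: "(q1, m) \<in> delta A q None \<Longrightarrow> comp G A q1 w (x \<otimes>\<^bsub>G\<^esub> m) k q' x'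
          \<Longrightarrow> comp G A q w x (Suc k) q' x'"

definition accepts_in :: "('g, 'm) monoid_scheme \<Rightarrow> ('q, 'a, 'g) gaut \<Rightarrow> 'a list \<Rightarrow> nat \<Rightarrow> bool" where
  "accepts_in G A w k \<longleftrightarrow> (\<exists>q' \<in> acc A. comp G A (init A) w \<one>\<^bsub>G\<^esub> k q' \<one>\<^bsub>G\<^esub>)"

definition gaut_lang :: "('g, 'm) monoid_scheme \<Rightarrow> ('q, 'a, 'g) gaut \<Rightarrow> 'a list set" where
  "gaut_lang G A = {w. \<exists>k. accepts_in G A w k}"

definition weakly_time_bounded ::
  "('g, 'm) monoid_scheme \<Rightarrow> ('q, 'a, 'g) gaut \<Rightarrow> (nat \<Rightarrow> nat) \<Rightarrow> bool" where
  "weakly_time_bounded G A t \<longleftrightarrow> (\<forall>w \<in> gaut_lang G A. \<exists>k \<le> t (length w). accepts_in G A w k)"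

text \<open>The class L(G)^w_{O(n)} over a given finite input alphabet Sigma
  (states are taken from nat, which is no restriction as state sets are finite).\<close>

definition weak_linear_class :: "('g, 'm) monoid_scheme \<Rightarrow> 'a set \<Rightarrow> 'a list set set" where
  "weak_linear_class G \<Sigma> = {L. \<exists>(A :: (nat, 'a, 'g) gaut) t.
       wf_gaut G A \<and> alphabet A = \<Sigma> \<and> gaut_lang G A = L
       \<and> (\<lambda>n. real (t n)) \<in> O(\<lambda>n. real n) \<and> weakly_time_bounded G A t}"

record ('n, 'a) cfg =
  nonterms :: "'n set"
  terms :: "'a set"
  prods :: "('n \<times> ('n + 'a) list) set"
  start :: 'n

definition wf_cfg :: "('n, 'a) cfg \<Rightarrow> bool" where
  "wf_cfg G \<longleftrightarrow> finite (nonterms G) \<and> finite (terms G) \<and> finite (prods G)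
     \<and> start G \<in> nonterms G
     \<and> (\<forall>(A, \<alpha>) \<in> prods G. A \<in> nonterms G
          \<and> (\<forall>s \<in> set \<alpha>. case s of Inl B \<Rightarrow> B \<in> nonterms G | Inr a \<Rightarrow> a \<in> terms G))"

definition derive1 :: "('n, 'a) cfg \<Rightarrow> ('n + 'a) list \<Rightarrow> ('n + 'a) list \<Rightarrow> bool" where
  "derive1 G u v \<longleftrightarrow> (\<exists>x y A \<alpha>. (A, \<alpha>) \<in> prods G \<and> u = x @ [Inl A] @ y \<and> v = x @ \<alpha> @ y)"

definition cfg_lang :: "('n, 'a) cfg \<Rightarrow> 'a list set" where
  "cfg_lang G = {w. (derive1 G)\<^sup>*\<^sup>* [Inl (start G)] (map Inr w)}"

definition CF :: "'a set \<Rightarrow> 'a list set set" where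
  "CF \<Sigma> = {L. \<exists>G :: (nat, 'a) cfg. wf_cfg G \<and> terms G = \<Sigma> \<and> cfg_lang G = L}"

end

theory Submission
  imports Defs "HOL-Library.Countable_Set"
begin

text \<open>A context-free language is recognised by a pushdown automaton simulating leftmost derivations,
  and the register of an \<open>F\<^sub>2\<close>-automaton can serve as its stack: the free group over \<open>nat\<close> embeds
  into \<open>F\<^sub>2\<close> by \<open>c \<mapsto> a\<^sup>c b a\<^sup>-\<^sup>c\<close>, so pushing and popping become multiplication by a generator and its
  inverse. After removing \<open>\<epsilon>\<close>- and unit productions every simulation step either reads a letter or
  is paid for by a branching production, so accepting computations have linear length.
  Conversely, an \<open>F\<^sub>2\<close>-automaton is a graph whose edges write single letters of \<open>F\<^sub>2\<close>, and a word
  is accepted iff it labels a walk whose written word freely reduces to \<open>1\<close>. Such a walk is empty,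
  starts with a silent edge, or splits at the letter cancelling its first letter, which yields a
  grammar with one nonterminal for each pair of vertices.\<close>

section \<open>Free reduction\<close>

definition inv_letter :: "'g \<times> bool \<Rightarrow> 'g \<times> bool" where
  "inv_letter x = (fst x, \<not> snd x)"

lemma inv_letter_inv_letter [simp]: "inv_letter (inv_letter x) = x"
  by (simp add: inv_letter_def)

lemma inv_letter_Pair [simp]: "inv_letter (g, s) = (g, \<not> s)"
  by (simp add: inv_letter_def)

lemma inv_letter_neq [simp]: "inv_letter x \<noteq> x" "x \<noteq> inv_letter x"
  by (simp_all add: inv_letter_def prod_eq_iff)

definition push_letter :: "'g \<times> bool \<Rightarrow> ('g \<times> bool) list \<Rightarrow> ('g \<times> bool) list" where
  "push_letter x r = (case r of [] \<Rightarrow> [x] | y # r' \<Rightarrow> if y = inv_letter x then r' else x # r)"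

primrec freduce :: "('g \<times> bool) list \<Rightarrow> ('g \<times> bool) list" where
  "freduce [] = []"
| "freduce (x # w) = push_letter x (freduce w)"

abbreviation freduced :: "('g \<times> bool) list \<Rightarrow> bool" where
  "freduced \<equiv> successively (\<lambda>x y. y \<noteq> inv_letter x)"

lemma cancels_iff_inv_letter: "cancels x y \<longleftrightarrow> y = inv_letter x"
  by (cases x; cases y) (auto simp: cancels_def inv_letter_def)

lemma reduce_eq_freduce: "reduce w = freduce w"
  by (induction w) (auto simp: push_letter_def cancels_iff_inv_letter split: list.split)

lemma reduced_iff_freduced: "reduced w \<longleftrightarrow> freduced w"
  by (simp add: reduced_def successively_conv_nth cancels_iff_inv_letter)

lemma freduced_freduce: "freduced (freduce w)"
  by (induction w) (auto simp: push_letter_def successively_Cons split: list.split)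

lemma freduce_freduced: "freduced w \<Longrightarrow> freduce w = w"
  by (induction w) (auto simp: push_letter_def successively_Cons split: list.split)

lemma freduce_idem [simp]: "freduce (freduce w) = freduce w"
  by (simp add: freduce_freduced freduced_freduce)

lemma push_letter_push_inv_letter:
  assumes "freduced z"
  shows "push_letter x (push_letter (inv_letter x) z) = z"
  using assms by (cases z rule: remdups_adj.cases) (auto simp: push_letter_def)

lemma freduce_append_right: "freduce (u @ v) = freduce (u @ freduce v)"
  by (induction u) auto

lemma push_letter_freduce_append:
  assumes "freduced r"
  shows "push_letter x (freduce (r @ v)) = freduce (push_letter x r @ v)"
proof (cases r)
  case (Cons y r')
  with assms show ?thesis
    using push_letter_push_inv_letter[OF freduced_freduce, of x "r' @ v"]
    by (auto simp: push_letter_def)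
qed (simp add: push_letter_def)

lemma freduce_append_left: "freduce (u @ v) = freduce (freduce u @ v)"
  by (induction u) (simp_all add: push_letter_freduce_append freduced_freduce)

lemma freduce_append_assoc: "freduce (freduce (x @ y) @ z) = freduce (x @ y @ z)"
  by (metis append_assoc freduce_append_left)

lemma freduce_Nil_middle: "freduce u = [] \<Longrightarrow> freduce (x @ u @ y) = freduce (x @ y)"
  by (metis append_Nil freduce_append_left freduce_append_right)

lemma freduce_cancel_pair: "freduce (x @ a # inv_letter a # y) = freduce (x @ y)"
proof -
  have "freduce (a # inv_letter a # y) = freduce y"
    using push_letter_push_inv_letter[OF freduced_freduce, of a y] by simp
  then show ?thesis
    by (metis freduce_append_right)
qed

lemma freduce_conjugate:
  "freduce u = [] \<Longrightarrow> freduce (x # u @ inv_letter x # v) = freduce v"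
  using freduce_Nil_middle[of u "[x]" "inv_letter x # v"] freduce_cancel_pair[of "[]" x v]
  by simp

lemma freduce_Cons_decomp:
  "freduce l = z # r \<Longrightarrow> \<exists>u v. l = u @ z # v \<and> freduce u = [] \<and> freduce v = r"
proof (induction "length l" arbitrary: l z r rule: less_induct)
  case less
  then obtain y l' where l: "l = y # l'"
    by (cases l) auto
  show ?case
  proof (cases "freduce l'")
    case Nil
    with less.prems l show ?thesis
      by (intro exI[of _ "[]"] exI[of _ l']) (auto simp: push_letter_def)
  next
    case (Cons y' r')
    show ?thesis
    proof (cases "y' = inv_letter y")
      case True
      with less.prems l Cons have r': "r' = z # r"
        by (simp add: push_letter_def)
      obtain u1 v1 where l': "l' = u1 @ y' # v1" "freduce u1 = []" "freduce v1 = r'"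
        using less.hyps[of l' y' r'] l Cons by auto
      obtain u2 v2 where v1: "v1 = u2 @ z # v2" "freduce u2 = []" "freduce v2 = r"
        using less.hyps[of v1 z r] l l' r' by auto
      have "freduce (y # u1 @ y' # u2) = []"
        using freduce_conjugate[OF l'(2), of y u2] True v1(2) by simp
      with l l' v1 show ?thesis
        by (intro exI[of _ "y # u1 @ y' # u2"] exI[of _ v2]) auto
    next
      case False
      with less.prems l Cons show ?thesis
        by (intro exI[of _ "[]"] exI[of _ l']) (auto simp: push_letter_def)
    qed
  qed
qed

lemma freduce_Nil_decomp:
  assumes "freduce (x # l) = []"
  obtains u v where "l = u @ inv_letter x # v" "freduce u = []" "freduce v = []"
proof -
  from assms have "freduce l = [inv_letter x]"
    by (auto simp: push_letter_def split: list.splits if_splits)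
  with freduce_Cons_decomp[of l] that show ?thesis
    by blast
qed

lemma mult_F2: "x \<otimes>\<^bsub>F2\<^esub> m = freduce (x @ m)"
  by (simp add: F2_def reduce_eq_freduce)

lemma one_F2: "\<one>\<^bsub>F2\<^esub> = []"
  by (simp add: F2_def)

lemma carrier_F2: "carrier F2 = {w. freduced w}"
  by (simp add: F2_def reduced_iff_freduced)

section \<open>The free group over \<open>nat\<close> inside \<open>F\<^sub>2\<close>\<close>

lemma freduce_replicate_cancel:
  "freduce (u @ replicate n x @ replicate n (inv_letter x) @ v) = freduce (u @ v)"
proof (induction n)
  case (Suc n)
  have "replicate (Suc n) x = replicate n x @ [x]"
    by (simp add: replicate_append_same)
  then have "u @ replicate (Suc n) x @ replicate (Suc n) (inv_letter x) @ v
      = (u @ replicate n x) @ x # inv_letter x # replicate n (inv_letter x) @ v"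
    by simp
  then show ?case
    using Suc freduce_cancel_pair[of "u @ replicate n x" x] by simp
qed simp

lemma freduced_replicate [simp]: "freduced (replicate n x)"
  by (induction n) (auto simp: successively_Cons hd_replicate)

definition a_pow :: "nat \<Rightarrow> f2_letter list" where
  "a_pow c = replicate c (False, False)"

definition a_inv_pow :: "nat \<Rightarrow> f2_letter list" where
  "a_inv_pow c = replicate c (False, True)"

text \<open>The letter \<open>(c, s)\<close> of the free group over \<open>nat\<close> is sent to \<open>a\<^sup>c b\<^sup>\<plusminus>\<^sup>1 a\<^sup>-\<^sup>c\<close>;
  these conjugates of \<open>b\<close> freely generate a subgroup of \<open>F\<^sub>2\<close>.\<close>

definition embed_letter :: "nat \<times> bool \<Rightarrow> f2_letter list" where
  "embed_letter x = a_pow (fst x) @ (True, snd x) # a_inv_pow (fst x)"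

definition embed_word :: "(nat \<times> bool) list \<Rightarrow> f2_letter list" where
  "embed_word l = concat (map embed_letter l)"

lemma embed_word_simps [simp]:
  "embed_word [] = []" "embed_word (x # l) = embed_letter x @ embed_word l"
  "embed_word (l1 @ l2) = embed_word l1 @ embed_word l2"
  by (simp_all add: embed_word_def)

lemma freduced_embed_letter: "freduced (embed_letter x)"
  by (auto simp: embed_letter_def a_pow_def a_inv_pow_def successively_append_iff successively_Cons
      freduced_replicate last_replicate hd_replicate)

lemma freduce_a_inv_pow_a_pow: "freduce (u @ a_inv_pow n @ a_pow n @ v) = freduce (u @ v)"
  using freduce_replicate_cancel[of u n "(False, True)" v] by (simp add: a_pow_def a_inv_pow_def)

lemma freduce_a_pow_a_inv_pow: "freduce (u @ a_pow n @ a_inv_pow n @ v) = freduce (u @ v)"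
  using freduce_replicate_cancel[of u n "(False, False)" v] by (simp add: a_pow_def a_inv_pow_def)

lemma freduce_embed_letter_cancel:
  "freduce (u @ embed_letter x @ embed_letter (inv_letter x) @ v) = freduce (u @ v)"
proof -
  obtain c s where x: "x = (c, s)"
    by (cases x)
  have "freduce (u @ embed_letter x @ embed_letter (inv_letter x) @ v)
      = freduce ((u @ a_pow c @ [(True, s)]) @ a_inv_pow c @ a_pow c @ (True, \<not> s) # a_inv_pow c @ v)"
    by (simp add: x embed_letter_def)
  also have "\<dots> = freduce ((u @ a_pow c) @ (True, s) # inv_letter (True, s) # a_inv_pow c @ v)"
    by (subst freduce_a_inv_pow_a_pow) simp
  also have "\<dots> = freduce ((u @ a_pow c) @ a_inv_pow c @ v)"
    by (rule freduce_cancel_pair)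
  also have "\<dots> = freduce (u @ v)"
    using freduce_a_pow_a_inv_pow[of u c v] by simp
  finally show ?thesis .
qed

lemma freduce_embed_word: "freduce (embed_word l) = freduce (embed_word (freduce l))"
proof (induction l)
  case (Cons x l)
  have "freduce (embed_word (x # l)) = freduce (embed_letter x @ embed_word (freduce l))"
    by (metis Cons embed_word_simps(2) freduce_append_right)
  also have "\<dots> = freduce (embed_word (freduce (x # l)))"
    using freduce_embed_letter_cancel[of "[]" x]
    by (cases "freduce l") (auto simp: push_letter_def)
  finally show ?case .
qed simp

definition a_pow_diff :: "nat \<Rightarrow> nat \<Rightarrow> f2_letter list" where
  "a_pow_diff c c' = (if c \<le> c' then a_pow (c' - c) else a_inv_pow (c - c'))"

lemma freduce_a_inv_pow_a_pow_diff:
  "freduce (u @ a_inv_pow c @ a_pow c' @ v) = freduce (u @ a_pow_diff c c' @ v)"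
proof (cases "c \<le> c'")
  case True
  then have "a_pow c' = a_pow c @ a_pow (c' - c)"
    by (simp add: a_pow_def flip: replicate_add)
  with True show ?thesis
    using freduce_a_inv_pow_a_pow[of u c "a_pow (c' - c) @ v"] by (simp add: a_pow_diff_def)
next
  case False
  then have "a_inv_pow c = a_inv_pow (c - c') @ a_inv_pow c'"
    by (simp add: a_inv_pow_def flip: replicate_add)
  with False show ?thesis
    using freduce_a_inv_pow_a_pow[of "u @ a_inv_pow (c - c')" c' v] by (simp add: a_pow_diff_def)
qed

lemma freduced_a_pow_b_a_pow_diff:
  assumes "freduced ((True, s') # W)" "(c', s') \<noteq> (c, \<not> s)"
  shows "freduced (a_pow c @ (True, s) # a_pow_diff c c' @ (True, s') # W)"
proof -
  let ?T = "a_pow_diff c c' @ (True, s') # W"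
  have "freduced ?T"
    using assms(1)
    by (auto simp: a_pow_diff_def a_pow_def a_inv_pow_def successively_append_iff last_replicate)
  moreover have "hd ?T = (True, s') \<and> c = c' \<or> fst (hd ?T) = False"
    by (auto simp: a_pow_diff_def a_pow_def a_inv_pow_def hd_append)
  then have "hd ?T \<noteq> inv_letter (True, s)"
    using assms(2) by auto
  moreover have "freduced (a_pow c @ [(True, s)])"
    by (auto simp: a_pow_def successively_append_iff last_replicate)
  ultimately have "freduced ((a_pow c @ [(True, s)]) @ ?T)"
    by (subst successively_append_iff) simp
  then show ?thesis
    by simp
qed

text \<open>The reduced image of a nonempty reduced word keeps the prefix \<open>a\<^sup>c b\<^sup>\<plusminus>\<^sup>1\<close> of the image of its
  first letter, since consecutive images only cancel within their powers of \<open>a\<close>.\<close>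

lemma freduce_embed_word_Cons:
  assumes "freduced ((c, s) # l)"
  shows "\<exists>W. freduce (embed_word ((c, s) # l)) = a_pow c @ (True, s) # W"
  using assms
proof (induction l arbitrary: c s)
  case Nil
  then show ?case
    using freduced_embed_letter[of "(c, s)"] by (simp add: embed_letter_def freduce_freduced)
next
  case (Cons y l)
  obtain c' s' where y: "y = (c', s')"
    by (cases y)
  from Cons.prems y have red_l: "freduced ((c', s') # l)" and ne: "(c', s') \<noteq> (c, \<not> s)"
    by (simp_all add: successively_Cons)
  then obtain W where W: "freduce (embed_word ((c', s') # l)) = a_pow c' @ (True, s') # W"
    using Cons.IH by blast
  have "freduced (a_pow c' @ (True, s') # W)"
    using W freduced_freduce by metis
  then have red_W: "freduced ((True, s') # W)"
    by (simp add: successively_append_iff)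
  have "freduce (embed_word ((c, s) # y # l))
      = freduce ((a_pow c @ [(True, s)]) @ a_inv_pow c @ a_pow c' @ (True, s') # W)"
    by (metis W y append.assoc append_Cons append_Nil embed_letter_def embed_word_simps(2)
        freduce_append_right fst_conv snd_conv)
  also have "\<dots> = freduce ((a_pow c @ [(True, s)]) @ a_pow_diff c c' @ (True, s') # W)"
    by (rule freduce_a_inv_pow_a_pow_diff)
  also have "\<dots> = a_pow c @ (True, s) # a_pow_diff c c' @ (True, s') # W"
    using freduced_a_pow_b_a_pow_diff[OF red_W ne] by (simp add: freduce_freduced)
  finally show ?case
    by auto
qed

lemma freduce_embed_word_Nil_iff: "freduce (embed_word l) = [] \<longleftrightarrow> freduce l = []"
proof
  assume "freduce (embed_word l) = []"
  then have "freduce (embed_word (freduce l)) = []"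
    by (simp add: freduce_embed_word[symmetric])
  then show "freduce l = []"
    using freduce_embed_word_Cons[of _ _ "tl (freduce l)"] freduced_freduce[of l]
    by (cases "freduce l") fastforce+
qed (metis freduce_embed_word embed_word_simps(1) freduce.simps(1))

section \<open>Walks in labelled graphs and generation by grammars\<close>

definition list_of_option :: "'a option \<Rightarrow> 'a list" where
  "list_of_option s = (case s of None \<Rightarrow> [] | Some x \<Rightarrow> [x])"

lemma list_of_option_simps [simp]: "list_of_option None = []" "list_of_option (Some x) = [x]"
  by (simp_all add: list_of_option_def)

text \<open>\<open>walk E u w l n v\<close>: a path of \<open>n\<close> edges from \<open>u\<close> to \<open>v\<close>, where an edge \<open>E u s lo v\<close> reads
  the optional input letter \<open>s\<close> and writes the optional letter \<open>lo\<close>; \<open>w\<close> and \<open>l\<close> collect them.\<close>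

inductive walk :: "('v \<Rightarrow> 'a option \<Rightarrow> 'l option \<Rightarrow> 'v \<Rightarrow> bool) \<Rightarrow> 'v \<Rightarrow> 'a list \<Rightarrow> 'l list \<Rightarrow> nat
    \<Rightarrow> 'v \<Rightarrow> bool"
  for E where
  walk_Nil: "walk E u [] [] 0 u"
| walk_Cons: "E u s lo u' \<Longrightarrow> walk E u' w l n v
    \<Longrightarrow> walk E u (list_of_option s @ w) (list_of_option lo @ l) (Suc n) v"

lemma walk_append:
  "walk E u w1 l1 n1 m \<Longrightarrow> walk E m w2 l2 n2 v \<Longrightarrow> walk E u (w1 @ w2) (l1 @ l2) (n1 + n2) v"
proof (induction rule: walk.induct)
  case (walk_Cons u s lo u' w l n v)
  then show ?case
    using walk.walk_Cons[where E = E, OF walk_Cons.hyps(1) walk_Cons.IH[OF walk_Cons.prems]] by simp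
qed simp

lemma walk_edge: "E u s lo v \<Longrightarrow> walk E u (list_of_option s) (list_of_option lo) 1 v"
  using walk_Cons[OF _ walk_Nil] by fastforce

lemma walk_split_output:
  "walk E u w l n v \<Longrightarrow> l = l1 @ l2 \<Longrightarrow>
    \<exists>m w1 w2 n1 n2. w = w1 @ w2 \<and> n = n1 + n2 \<and> walk E u w1 l1 n1 m \<and> walk E m w2 l2 n2 v"
proof (induction arbitrary: l1 rule: walk.induct)
  case (walk_Nil u)
  then show ?case
    by (auto intro: walk.walk_Nil)
next
  case (walk_Cons u s lo u' w l n v)
  consider "lo = None" | "l1 = []" | x l1' where "lo = Some x" "l1 = x # l1'"
    using walk_Cons.prems by (cases l1; cases lo) auto
  then show ?case
  proof cases
    case 1
    with walk_Cons.prems walk_Cons.IH[of l1] obtain m w1 w2 n1 n2 where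
      "w = w1 @ w2" "n = n1 + n2" "walk E u' w1 l1 n1 m" "walk E m w2 l2 n2 v"
      by auto
    with 1 walk.walk_Cons[where E = E, OF walk_Cons.hyps(1), of w1 l1 n1 m] show ?thesis
      by (intro exI[of _ m] exI[of _ "list_of_option s @ w1"] exI[of _ w2] exI[of _ "Suc n1"]
          exI[of _ n2]) auto
  next
    case 2
    with walk_Cons.prems walk.walk_Cons[where E = E, OF walk_Cons.hyps] show ?thesis
      by (intro exI[of _ u] exI[of _ "[]"] exI[of _ "list_of_option s @ w"] exI[of _ 0]
          exI[of _ "Suc n"]) (auto intro: walk.walk_Nil)
  next
    case 3
    with walk_Cons.prems walk_Cons.IH[of l1'] obtain m w1 w2 n1 n2 where
      "w = w1 @ w2" "n = n1 + n2" "walk E u' w1 l1' n1 m" "walk E m w2 l2 n2 v"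
      by auto
    with 3 walk.walk_Cons[where E = E, OF walk_Cons.hyps(1), of w1 l1' n1 m] show ?thesis
      by (intro exI[of _ m] exI[of _ "list_of_option s @ w1"] exI[of _ w2] exI[of _ "Suc n1"]
          exI[of _ n2]) auto
  qed
qed

lemma walk_split_first_output:
  "walk E u w l n v \<Longrightarrow> l = y # l' \<Longrightarrow> \<exists>m1 s m2 w1 w2 n1 n2. walk E u w1 [] n1 m1
    \<and> E m1 s (Some y) m2 \<and> walk E m2 w2 l' n2 v \<and> w = w1 @ list_of_option s @ w2 \<and> n = n1 + Suc n2"
proof (induction rule: walk.induct)
  case (walk_Cons u s lo u' w l n v)
  show ?case
  proof (cases lo)
    case None
    with walk_Cons obtain m1 s' m2 w1 w2 n1 n2 where "walk E u' w1 [] n1 m1" "E m1 s' (Some y) m2"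
      "walk E m2 w2 l' n2 v" "w = w1 @ list_of_option s' @ w2" "n = n1 + Suc n2"
      by auto
    with None walk.walk_Cons[where E = E, OF walk_Cons.hyps(1), of w1 "[]" n1 m1] show ?thesis
      by (intro exI[of _ m1] exI[of _ s'] exI[of _ m2] exI[of _ "list_of_option s @ w1"] exI[of _ w2]
          exI[of _ "Suc n1"] exI[of _ n2]) auto
  next
    case (Some x)
    with walk_Cons.hyps walk_Cons.prems show ?thesis
      by (intro exI[of _ u] exI[of _ s] exI[of _ u'] exI[of _ "[]"] exI[of _ w] exI[of _ 0]
          exI[of _ n]) (auto intro: walk.walk_Nil)
  qed
qed simp

lemma walk_cancelling_pair:
  assumes "walk E u w (x # l) n v" and "freduce (x # l) = []"
  obtains w0 n0 m0 s1 u1 w1 l1 n1 v1 s2 m2 w2 l2 n2 where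
    "walk E u w0 [] n0 m0" "E m0 s1 (Some x) u1" "walk E u1 w1 l1 n1 v1" "freduce l1 = []"
    "E v1 s2 (Some (inv_letter x)) m2" "walk E m2 w2 l2 n2 v" "freduce l2 = []"
    "w = w0 @ list_of_option s1 @ w1 @ list_of_option s2 @ w2" "l = l1 @ inv_letter x # l2"
    "n = Suc (Suc (n0 + n1 + n2))"
proof -
  obtain la lb where l: "l = la @ inv_letter x # lb" "freduce la = []" "freduce lb = []"
    using freduce_Nil_decomp[OF assms(2)] .
  obtain m0 s1 u1 w0 wr n0 nr where first: "walk E u w0 [] n0 m0" "E m0 s1 (Some x) u1"
    "walk E u1 wr l nr v" "w = w0 @ list_of_option s1 @ wr" "n = n0 + Suc nr"
    using walk_split_first_output[OF assms(1) refl] by blast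
  obtain m3 wa wb na nb where mid: "wr = wa @ wb" "nr = na + nb" "walk E u1 wa la na m3"
    "walk E m3 wb (inv_letter x # lb) nb v"
    using walk_split_output[OF first(3) l(1)] by blast
  obtain v1 s2 m2 wc w2 nc n2 where second: "walk E m3 wc [] nc v1"
    "E v1 s2 (Some (inv_letter x)) m2" "walk E m2 w2 lb n2 v" "wb = wc @ list_of_option s2 @ w2"
    "nb = nc + Suc n2"
    using walk_split_first_output[OF mid(4) refl] by blast
  have "walk E u1 (wa @ wc) la (na + nc) v1"
    using walk_append[OF mid(3) second(1)] by simp
  with first second mid l show thesis
    by (intro that[of w0 n0 m0 s1 u1 "wa @ wc" la "na + nc" v1 s2 m2 w2 lb n2]) auto
qed

text \<open>A big-step form of \<^term>\<open>(derive1 G)\<^sup>*\<^sup>*\<close> that splits the word along the symbols of \<open>\<alpha>\<close>.\<close>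

inductive generates :: "('n \<times> ('n + 'a) list) set \<Rightarrow> ('n + 'a) list \<Rightarrow> 'a list \<Rightarrow> bool" for P where
  generates_Nil: "generates P [] []"
| generates_Inr: "generates P \<alpha> w \<Longrightarrow> generates P (Inr a # \<alpha>) (a # w)"
| generates_Inl: "(A, \<gamma>) \<in> P \<Longrightarrow> generates P \<gamma> u \<Longrightarrow> generates P \<alpha> v
    \<Longrightarrow> generates P (Inl A # \<alpha>) (u @ v)"

lemma generates_Nil_iff [simp]: "generates P [] w \<longleftrightarrow> w = []"
  by (auto elim: generates.cases intro: generates.intros)

lemma generates_Inl_iff:
  "generates P (Inl A # \<alpha>) w \<longleftrightarrow>
    (\<exists>\<gamma> u v. w = u @ v \<and> (A, \<gamma>) \<in> P \<and> generates P \<gamma> u \<and> generates P \<alpha> v)"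
proof
  assume "generates P (Inl A # \<alpha>) w"
  then show "\<exists>\<gamma> u v. w = u @ v \<and> (A, \<gamma>) \<in> P \<and> generates P \<gamma> u \<and> generates P \<alpha> v"
    by (cases rule: generates.cases) auto
qed (auto intro: generates.intros)

lemma generates_Inr_iff: "generates P (Inr a # \<alpha>) w \<longleftrightarrow> (\<exists>v. w = a # v \<and> generates P \<alpha> v)"
proof
  assume "generates P (Inr a # \<alpha>) w"
  then show "\<exists>v. w = a # v \<and> generates P \<alpha> v"
    by (cases rule: generates.cases) auto
qed (auto intro: generates.intros)

lemma generates_append:
  "generates P \<alpha> w1 \<Longrightarrow> generates P \<beta> w2 \<Longrightarrow> generates P (\<alpha> @ \<beta>) (w1 @ w2)"
proof (induction rule: generates.induct)
  case (generates_Inl A \<gamma> u \<alpha> v)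
  then show ?case
    using generates.generates_Inl[of A \<gamma> P u "\<alpha> @ \<beta>" "v @ w2"] by simp
qed (simp_all add: generates.generates_Inr)

lemma generates_append_split:
  "generates P (\<alpha> @ \<beta>) w \<Longrightarrow> \<exists>w1 w2. w = w1 @ w2 \<and> generates P \<alpha> w1 \<and> generates P \<beta> w2"
proof (induction \<alpha> arbitrary: w)
  case (Cons x \<alpha>)
  show ?case
  proof (cases x)
    case (Inl A)
    with Cons.prems obtain \<gamma> u v where "w = u @ v" "(A, \<gamma>) \<in> P" "generates P \<gamma> u"
      "generates P (\<alpha> @ \<beta>) v"
      by (auto simp: generates_Inl_iff)
    moreover from Cons.IH[OF this(4)] obtain v1 v2 where
      "v = v1 @ v2" "generates P \<alpha> v1" "generates P \<beta> v2"
      by blast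
    ultimately show ?thesis
      using Inl generates.generates_Inl[of A \<gamma> P u \<alpha> v1]
      by (intro exI[of _ "u @ v1"] exI[of _ v2]) simp
  next
    case (Inr a)
    with Cons.prems obtain v where "w = a # v" "generates P (\<alpha> @ \<beta>) v"
      by (auto simp: generates_Inr_iff)
    moreover from Cons.IH[OF this(2)] obtain v1 v2 where
      "v = v1 @ v2" "generates P \<alpha> v1" "generates P \<beta> v2"
      by blast
    ultimately show ?thesis
      using Inr generates.generates_Inr[of P \<alpha> v1 a]
      by (intro exI[of _ "a # v1"] exI[of _ v2]) simp
  qed
qed simp

lemma generates_append_iff:
  "generates P (\<alpha> @ \<beta>) w \<longleftrightarrow> (\<exists>w1 w2. w = w1 @ w2 \<and> generates P \<alpha> w1 \<and> generates P \<beta> w2)"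
  by (auto dest: generates_append_split simp: generates_append)

lemma generates_map_Inr: "generates P (map Inr w) w"
  by (induction w) (auto intro: generates.intros)

lemma generates_map_Inr_iff: "generates P (map Inr v) w \<longleftrightarrow> w = v"
  by (induction v arbitrary: w) (auto simp: generates_Inr_iff)

lemma generates_single_Inl: "(A, \<gamma>) \<in> P \<Longrightarrow> generates P \<gamma> u \<Longrightarrow> generates P [Inl A] u"
  using generates_Inl[of A \<gamma> P u "[]" "[]"] by simp

lemma generates_admissible:
  assumes "generates P \<alpha> w" and "\<And>B \<gamma> u. (B, \<gamma>) \<in> P \<Longrightarrow> generates Q \<gamma> u \<Longrightarrow> generates Q [Inl B] u"
  shows "generates Q \<alpha> w"
  using assms(1)
proof (induction rule: generates.induct)
  case (generates_Inl B \<gamma> u \<alpha> v)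
  then show ?case
    using generates_append[OF assms(2)] by fastforce
qed (auto intro: generates.intros)

lemma generates_word_prods_Inl_iff:
  "generates {(B, map Inr u) | B u. S B u} (Inl B # \<alpha>) w \<longleftrightarrow>
    (\<exists>u v. w = u @ v \<and> S B u \<and> generates {(B, map Inr u) | B u. S B u} \<alpha> v)"
  by (auto simp: generates_Inl_iff generates_map_Inr_iff) (blast intro: generates_map_Inr)+

lemma generates_word_prods_single:
  "generates {(B, map Inr u) | B u. S B u} [Inl B] w \<longleftrightarrow> S B w"
  by (simp add: generates_word_prods_Inl_iff)

lemma derives_context:
  "(derive1 G)\<^sup>*\<^sup>* u v \<Longrightarrow> (derive1 G)\<^sup>*\<^sup>* (x @ u @ y) (x @ v @ y)"
proof (induction rule: rtranclp_induct)
  case (step v v')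
  then obtain x' y' A \<alpha> where "(A, \<alpha>) \<in> prods G" "v = x' @ [Inl A] @ y'" "v' = x' @ \<alpha> @ y'"
    by (auto simp: derive1_def)
  then have "derive1 G (x @ v @ y) (x @ v' @ y)"
    unfolding derive1_def by (intro exI[of _ "x @ x'"] exI[of _ "y' @ y"]) auto
  with step.IH show ?case
    by simp
qed simp

lemma derive1_prod: "(A, \<gamma>) \<in> prods G \<Longrightarrow> derive1 G (Inl A # \<alpha>) (\<gamma> @ \<alpha>)"
  unfolding derive1_def by (intro exI[of _ "[]"] exI[of _ \<alpha>]) auto

lemma generates_imp_derives:
  assumes "generates P \<alpha> w" and "\<And>A \<gamma>. (A, \<gamma>) \<in> P \<Longrightarrow> (derive1 G)\<^sup>*\<^sup>* [Inl A] \<gamma>"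
  shows "(derive1 G)\<^sup>*\<^sup>* \<alpha> (map Inr w)"
  using assms(1)
proof (induction rule: generates.induct)
  case (generates_Inr \<alpha> w a)
  then show ?case
    using derives_context[of G \<alpha> "map Inr w" "[Inr a]" "[]"] by simp
next
  case (generates_Inl A \<gamma> u \<alpha> v)
  have "(derive1 G)\<^sup>*\<^sup>* (Inl A # \<alpha>) (\<gamma> @ \<alpha>)"
    using derives_context[OF assms(2)[OF generates_Inl.hyps(1)], of "[]" \<alpha>] by simp
  also have "(derive1 G)\<^sup>*\<^sup>* (\<gamma> @ \<alpha>) (map Inr u @ \<alpha>)"
    using derives_context[OF generates_Inl.IH(1), of "[]" \<alpha>] by simp
  also have "(derive1 G)\<^sup>*\<^sup>* (map Inr u @ \<alpha>) (map Inr u @ map Inr v)"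
    using derives_context[OF generates_Inl.IH(2), of "map Inr u" "[]"] by simp
  finally show ?case
    by simp
qed simp

lemma derives_imp_generates:
  "(derive1 G)\<^sup>*\<^sup>* \<alpha> (map Inr w) \<Longrightarrow> generates (prods G) \<alpha> w"
proof (induction rule: converse_rtranclp_induct)
  case base
  then show ?case
    by (rule generates_map_Inr)
next
  case (step u v)
  then obtain x y A \<gamma> where A: "(A, \<gamma>) \<in> prods G" "u = x @ [Inl A] @ y" "v = x @ \<gamma> @ y"
    by (auto simp: derive1_def)
  with step.IH obtain w1 w2 w3 where w: "w = w1 @ w2 @ w3"
    and gen: "generates (prods G) x w1" "generates (prods G) \<gamma> w2" "generates (prods G) y w3"
    by (auto simp: generates_append_iff)
  have "generates (prods G) (x @ [Inl A] @ y) (w1 @ w2 @ w3)"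
    by (intro generates_append gen generates_single_Inl[OF A(1)])
  with A(2) w show ?case
    by simp
qed

lemma cfg_lang_generates: "cfg_lang G = {w. generates (prods G) [Inl (start G)] w}"
proof -
  have "(derive1 G)\<^sup>*\<^sup>* [Inl A] \<gamma>" if "(A, \<gamma>) \<in> prods G" for A \<gamma>
    using derive1_prod[OF that, of "[]"] by simp
  then show ?thesis
    unfolding cfg_lang_def using generates_imp_derives derives_imp_generates by blast
qed

section \<open>From \<open>F\<^sub>2\<close>-automata to context-free grammars\<close>

lemma comp_Cons_option:
  assumes "(q1, m) \<in> delta A q s" and "comp G A q1 w (x \<otimes>\<^bsub>G\<^esub> m) k q' x'"
  shows "comp G A q (list_of_option s @ w) x (Suc k) q' x'"
  using assms by (cases s) (auto intro: comp.read comp.eps)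

lemma comp_induct_option [consumes 1, case_names stop step]:
  assumes "comp G A q w x k q' x'"
    and "\<And>q x. P q [] x 0 q x"
    and "\<And>q s q1 m w x k q' x'. (q1, m) \<in> delta A q s \<Longrightarrow> comp G A q1 w (x \<otimes>\<^bsub>G\<^esub> m) k q' x'
      \<Longrightarrow> P q1 w (x \<otimes>\<^bsub>G\<^esub> m) k q' x' \<Longrightarrow> P q (list_of_option s @ w) x (Suc k) q' x'"
  shows "P q w x k q' x'"
  using assms(1)
proof (induction rule: comp.induct)
  case (read q1 m q a w x k q' x')
  then show ?case
    using assms(3)[of q1 m q "Some a"] by simp
next
  case (eps q1 m q w x k q' x')
  then show ?case
    using assms(3)[of q1 m q None] by simp
qed (rule assms(2))

lemma wf_cfgI:
  assumes "finite N" "finite T" "S \<in> N"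
    and "\<And>B \<alpha>. (B, \<alpha>) \<in> P \<Longrightarrow> B \<in> N \<and> set \<alpha> \<subseteq> Inl ` N \<union> Inr ` T \<and> length \<alpha> \<le> b"
  shows "wf_cfg \<lparr>nonterms = N, terms = T, prods = P, start = S\<rparr>"
proof -
  have "P \<subseteq> N \<times> {\<alpha>. set \<alpha> \<subseteq> Inl ` N \<union> Inr ` T \<and> length \<alpha> \<le> b}"
    using assms(4) by auto
  moreover have "finite (N \<times> {\<alpha>. set \<alpha> \<subseteq> Inl ` N \<union> Inr ` T \<and> length \<alpha> \<le> b})"
    using assms(1,2) by (intro finite_cartesian_product finite_lists_length_le) auto
  ultimately have "finite P"
    by (rule finite_subset)
  with assms show ?thesis
    unfolding wf_cfg_def by (fastforce split: sum.split)
qed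

type_synonym vertex = "nat + nat \<times> nat"

locale f2_automaton =
  fixes A :: "(nat, 'a, f2_letter list) gaut"
  assumes wf: "wf_gaut F2 A"
begin

definition transitions :: "(nat \<times> 'a option \<times> nat \<times> f2_letter list) set" where
  "transitions = {(q, s, q', m). (q', m) \<in> delta A q s}"

lemma delta_dom:
  assumes "(q', m) \<in> delta A q s"
  shows "q \<in> states A" "q' \<in> states A" "set (list_of_option s) \<subseteq> alphabet A"
proof -
  from assms wf have "q \<in> states A \<and> (s = None \<or> (\<exists>a \<in> alphabet A. s = Some a))"
    unfolding wf_gaut_def by blast
  with assms wf show "q \<in> states A" "q' \<in> states A" "set (list_of_option s) \<subseteq> alphabet A"
    unfolding wf_gaut_def by auto
qed

lemma finite_transitions: "finite transitions"
proof -
  let ?labels = "insert None (Some ` alphabet A)"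
  let ?S = "SIGMA p : states A \<times> ?labels. delta A (fst p) (snd p)"
  have "transitions \<subseteq> (\<lambda>((q, s), (q', m)). (q, s, q', m)) ` ?S"
  proof clarify
    fix q s q' m
    assume "(q, s, q', m) \<in> transitions"
    then have d: "(q', m) \<in> delta A q s"
      by (simp add: transitions_def)
    then have "q \<in> states A" "s \<in> ?labels"
      using delta_dom[OF d] by (cases s; simp)+
    with d show "(q, s, q', m) \<in> (\<lambda>((q, s), (q', m)). (q, s, q', m)) ` ?S"
      by (intro rev_image_eqI[of "((q, s), (q', m))"]) auto
  qed
  moreover have "finite ?S"
    using wf unfolding wf_gaut_def by (intro finite_SigmaI) auto
  ultimately show ?thesis
    using finite_subset by blast
qed

text \<open>A transition writing a word of length \<open>k > 0\<close> becomes a chain of \<open>k\<close> edges, each writing one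
  letter. The state \<open>q\<close> is the vertex \<open>Inl q\<close>; the inner vertices of the chain of a transition
  are \<open>Inr (t, i)\<close>, where \<open>t\<close> numbers the transition.\<close>

definition chain_vx :: "nat \<times> 'a option \<times> nat \<times> f2_letter list \<Rightarrow> nat \<Rightarrow> vertex" where
  "chain_vx x i = (case x of (q, s, q', m) \<Rightarrow>
     if i = 0 then Inl q else if i = length m then Inl q' else Inr (to_nat_on transitions x, i))"

inductive edge :: "vertex \<Rightarrow> 'a option \<Rightarrow> f2_letter option \<Rightarrow> vertex \<Rightarrow> bool" where
  edge_silent: "(q', []) \<in> delta A q s \<Longrightarrow> edge (Inl q) s None (Inl q')"
| edge_letter: "(q', m) \<in> delta A q s \<Longrightarrow> i < length m \<Longrightarrow>
    edge (chain_vx (q, s, q', m) i) (if i = 0 then s else None) (Some (m ! i)) (chain_vx (q, s, q', m) (Suc i))"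

definition vertices :: "vertex set" where
  "vertices = Inl ` states A \<union> (\<Union>(q, s, q', m) \<in> transitions. chain_vx (q, s, q', m) ` {..length m})"

lemma finite_vertices: "finite vertices"
  using wf finite_transitions unfolding vertices_def wf_gaut_def by auto

lemma chain_vx_0 [simp]: "chain_vx (q, s, q', m) 0 = Inl q"
  by (simp add: chain_vx_def)

lemma chain_vx_length [simp]: "m \<noteq> [] \<Longrightarrow> chain_vx (q, s, q', m) (length m) = Inl q'"
  by (simp add: chain_vx_def)

lemma chain_vx_inner:
  "0 < i \<Longrightarrow> i < length m \<Longrightarrow> chain_vx (q, s, q', m) i = Inr (to_nat_on transitions (q, s, q', m), i)"
  by (simp add: chain_vx_def)

lemma chain_vx_eq_Inl_iff:
  "i < length m \<Longrightarrow> chain_vx (q, s, q', m) i = Inl p \<longleftrightarrow> i = 0 \<and> p = q"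
  by (auto simp: chain_vx_def)

lemma to_nat_on_transitions_eq_iff:
  "x \<in> transitions \<Longrightarrow> x' \<in> transitions \<Longrightarrow> to_nat_on transitions x = to_nat_on transitions x' \<longleftrightarrow> x = x'"
  using countable_finite[OF finite_transitions] by simp

lemma edge_vertices: "edge u s lo v \<Longrightarrow> u \<in> vertices \<and> v \<in> vertices"
proof (induction rule: edge.induct)
  case (edge_silent q' q s)
  then show ?case
    using delta_dom by (auto simp: vertices_def)
next
  case (edge_letter q' m q s i)
  then have "(q, s, q', m) \<in> transitions"
    by (simp add: transitions_def)
  with edge_letter.hyps(2) show ?case
    unfolding vertices_def by (intro conjI UnI2 UN_I[of "(q, s, q', m)"]) auto
qed

lemma edge_labels: "edge u s lo v \<Longrightarrow> set (list_of_option s) \<subseteq> alphabet A"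
  by (induction rule: edge.induct) (auto dest: delta_dom(3))

lemma transition_walk:
  assumes "(q', m) \<in> delta A q s"
  shows "\<exists>n. walk edge (Inl q) (list_of_option s) m n (Inl q')"
proof (cases "m = []")
  case True
  with assms show ?thesis
    using walk_edge[where E = edge, OF edge_silent] by fastforce
next
  case False
  let ?x = "(q, s, q', m)"
  have "walk edge (chain_vx ?x i) (if i = 0 then list_of_option s else []) (drop i m) (length m - i) (Inl q')"
    if "i \<le> length m" for i
    using that
  proof (induction rule: inc_induct)
    case base
    from False show ?case
      by (auto intro: walk_Nil)
  next
    case (step i)
    have "walk edge (chain_vx ?x i) (list_of_option (if i = 0 then s else None) @ [])
        (list_of_option (Some (m ! i)) @ drop (Suc i) m) (Suc (length m - Suc i)) (Inl q')"
      using walk_Cons[OF edge_letter[OF assms step.hyps(2)] step.IH] by simp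
    with step.hyps(2) show ?case
      by (cases "i = 0") (simp_all add: Cons_nth_drop_Suc Suc_diff_Suc)
  qed
  from this[of 0] show ?thesis
    by auto
qed

lemma comp_imp_walk:
  "comp F2 A q w x k q' x' \<Longrightarrow> freduced x \<Longrightarrow>
    \<exists>l n. walk edge (Inl q) w l n (Inl q') \<and> x' = freduce (x @ l)"
proof (induction rule: comp_induct_option)
  case (stop q x)
  then show ?case
    by (intro exI[of _ "[]"]) (auto simp: freduce_freduced intro: walk_Nil)
next
  case (step q s q1 m w x k q' x')
  then obtain l n where l: "walk edge (Inl q1) w l n (Inl q')" "x' = freduce (freduce (x @ m) @ l)"
    by (auto simp: mult_F2 freduced_freduce)
  obtain n1 where "walk edge (Inl q) (list_of_option s) m n1 (Inl q1)"
    using transition_walk[OF step.hyps(1)] by blast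
  from walk_append[OF this l(1)] l(2) show ?case
    by (auto simp: freduce_append_assoc)
qed

lemma edge_from_inner:
  assumes "edge u s lo v" "u = chain_vx (q, s0, q', m) i" "(q, s0, q', m) \<in> transitions"
    "0 < i" "i < length m"
  shows "s = None \<and> lo = Some (m ! i) \<and> v = chain_vx (q, s0, q', m) (Suc i)"
  using assms(1)
proof (cases rule: edge.cases)
  case (edge_silent q1' q1)
  with assms(2,4,5) show ?thesis
    by (simp add: chain_vx_inner)
next
  case (edge_letter q1' m1 q1 s1 i1)
  then have "(q1, s1, q1', m1) \<in> transitions"
    by (simp add: transitions_def)
  with assms edge_letter have "(q1, s1, q1', m1) = (q, s0, q', m) \<and> i1 = i"
    by (auto simp: chain_vx_def to_nat_on_transitions_eq_iff split: if_splits)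
  with edge_letter assms(4) show ?thesis
    by auto
qed

lemma walk_chain_rest:
  assumes "walk edge u w l n v" "u = chain_vx (q, s, q', m) i" "(q, s, q', m) \<in> transitions"
    "0 < i" "i \<le> length m" "v \<in> range Inl"
  shows "\<exists>l' n'. n' \<le> n \<and> l = drop i m @ l' \<and> walk edge (Inl q') w l' n' v"
  using assms
proof (induction arbitrary: i rule: walk.induct)
  case (walk_Nil u)
  then have "i = length m"
    by (auto simp: chain_vx_def split: if_splits)
  with walk_Nil show ?case
    by (auto intro: walk.walk_Nil)
next
  case (walk_Cons u s0 lo u' w l n v)
  show ?case
  proof (cases "i = length m")
    case True
    with walk_Cons.prems have "u = Inl q'" "drop i m = []"
      by auto
    with walk.walk_Cons[OF walk_Cons.hyps(1,2)] show ?thesis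
      by (intro exI[of _ "list_of_option lo @ l"] exI[of _ "Suc n"]) simp
  next
    case False
    with walk_Cons.prems have i: "i < length m"
      by simp
    with edge_from_inner[OF walk_Cons.hyps(1)] walk_Cons.prems
    have step: "s0 = None" "lo = Some (m ! i)" "u' = chain_vx (q, s, q', m) (Suc i)"
      by auto
    with walk_Cons.IH[of "Suc i"] walk_Cons.prems i obtain l' n' where
      "n' \<le> n" "l = drop (Suc i) m @ l'" "walk edge (Inl q') w l' n' v"
      by auto
    with step i show ?thesis
      by (intro exI[of _ l'] exI[of _ n']) (auto simp: Cons_nth_drop_Suc)
  qed
qed

lemma edge_from_state:
  assumes "edge (Inl q) s lo v"
  obtains (silent) q' where "(q', []) \<in> delta A q s" "lo = None" "v = Inl q'"
    | (letter) q' m where "(q', m) \<in> delta A q s" "m \<noteq> []" "lo = Some (m ! 0)"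
      "v = chain_vx (q, s, q', m) 1"
  using assms
proof (cases rule: edge.cases)
  case (edge_silent q')
  then show ?thesis
    using silent by simp
next
  case (edge_letter q' m q0 s0 i)
  moreover from edge_letter have "i = 0" "q0 = q"
    using chain_vx_eq_Inl_iff[of i m q0 s0 q' q] by auto
  ultimately show ?thesis
    using letter[of q' m] by auto
qed

lemma walk_from_state:
  assumes "walk edge (Inl q) w l (Suc n) v" "v \<in> range Inl"
  obtains s q1 m w' l' n' where "(q1, m) \<in> delta A q s" "w = list_of_option s @ w'" "l = m @ l'"
    "n' \<le> n" "walk edge (Inl q1) w' l' n' v"
proof -
  from assms(1) obtain s lo u' w' l' where first: "edge (Inl q) s lo u'" "walk edge u' w' l' n v"
    "w = list_of_option s @ w'" "l = list_of_option lo @ l'"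
    by (cases rule: walk.cases) auto
  from first(1) show thesis
  proof (cases rule: edge_from_state)
    case (silent q')
    with first that[of q' "[]" s w' l' n] show thesis
      by simp
  next
    case (letter q' m)
    then have "(q, s, q', m) \<in> transitions" "0 < (1::nat)" "1 \<le> length m"
      by (simp_all add: transitions_def Suc_le_eq)
    from walk_chain_rest[OF first(2) letter(4) this assms(2)]
    obtain l'' n' where "n' \<le> n" "l' = drop 1 m @ l''" "walk edge (Inl q') w' l'' n' v"
      by blast
    with letter first that[of q' m s w' l'' n'] show thesis
      by (simp add: Cons_nth_drop_Suc)
  qed
qed

lemma walk_imp_comp:
  "walk edge (Inl q) w l n (Inl q') \<Longrightarrow> freduced x \<Longrightarrow> \<exists>k. comp F2 A q w x k q' (freduce (x @ l))"
proof (induction n arbitrary: q w l x rule: less_induct)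
  case (less n)
  show ?case
  proof (cases n)
    case 0
    with less.prems(1) have "q' = q" "w = []" "l = []"
      by (auto elim: walk.cases)
    with less.prems(2) show ?thesis
      by (auto intro: comp.stop simp: freduce_freduced)
  next
    case (Suc n0)
    with less.prems(1) obtain s q1 m w' l' n' where
      step: "(q1, m) \<in> delta A q s" "w = list_of_option s @ w'" "l = m @ l'" "n' \<le> n0"
        "walk edge (Inl q1) w' l' n' (Inl q')"
      by (auto elim: walk_from_state)
    with Suc less.IH[of n' q1 w' l' "freduce (x @ m)"] obtain k where
      "comp F2 A q1 w' (x \<otimes>\<^bsub>F2\<^esub> m) k q' (freduce (freduce (x @ m) @ l'))"
      by (auto simp: mult_F2 freduced_freduce)
    from comp_Cons_option[OF step(1) this] step(2,3) show ?thesis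
      by (auto simp: freduce_append_assoc)
  qed
qed

lemma gaut_lang_iff_walk:
  "w \<in> gaut_lang F2 A \<longleftrightarrow> (\<exists>f \<in> acc A. \<exists>l n. walk edge (Inl (init A)) w l n (Inl f) \<and> freduce l = [])"
  unfolding gaut_lang_def accepts_in_def one_F2
  using comp_imp_walk[of "init A" w "[]"] walk_imp_comp[of "init A" w _ _ _ "[]"] by fastforce

definition pair_nt :: "vertex \<Rightarrow> vertex \<Rightarrow> nat" where
  "pair_nt u v = Suc (to_nat (u, v))"

lemma pair_nt_eq_iff [simp]: "pair_nt u v = pair_nt u' v' \<longleftrightarrow> u = u' \<and> v = v'"
  by (simp add: pair_nt_def)

lemma pair_nt_neq_0 [simp]: "pair_nt u v \<noteq> 0"
  by (simp add: pair_nt_def)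

text \<open>The nonterminal \<^term>\<open>pair_nt u v\<close> generates the inputs of the walks from \<open>u\<close> to \<open>v\<close>
  whose register word reduces to the identity. Such a walk is empty, or starts with a silent
  edge, or splits at the edge writing the inverse of its first register letter.\<close>

definition graph_prods :: "(nat \<times> (nat + 'a) list) set" where
  "graph_prods =
     {(0, [Inl (pair_nt (Inl (init A)) (Inl f))]) | f. f \<in> acc A}
   \<union> {(pair_nt u u, []) | u. u \<in> vertices}
   \<union> {(pair_nt u v, [Inl (pair_nt u m), Inl (pair_nt m v)]) | u m v.
        u \<in> vertices \<and> m \<in> vertices \<and> v \<in> vertices}
   \<union> {(pair_nt u v, map Inr (list_of_option s) @ [Inl (pair_nt u' v)]) | u s u' v.
        edge u s None u' \<and> v \<in> vertices}
   \<union> {(pair_nt u v, map Inr (list_of_option s1) @ [Inl (pair_nt u' v')] @ map Inr (list_of_option s2))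
        | u s1 x u' v' s2 v. edge u s1 (Some x) u' \<and> edge v' s2 (Some (inv_letter x)) v}"

definition graph_nts :: "nat set" where
  "graph_nts = insert 0 ((\<lambda>(u, v). pair_nt u v) ` (vertices \<times> vertices))"

definition graph_cfg :: "(nat, 'a) cfg" where
  "graph_cfg = \<lparr>nonterms = graph_nts, terms = alphabet A, prods = graph_prods, start = 0\<rparr>"

lemma pair_nt_in_graph_nts: "u \<in> vertices \<Longrightarrow> v \<in> vertices \<Longrightarrow> pair_nt u v \<in> graph_nts"
  unfolding graph_nts_def by blast

lemma edge_label_symbols:
  "edge u s lo v \<Longrightarrow> set (map Inr (list_of_option s)) \<subseteq> Inr ` alphabet A \<and> length (list_of_option s) \<le> 1"
  using edge_labels[of u s lo v] by (cases s) auto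

lemma graph_prods_wf:
  assumes "(B, \<alpha>) \<in> graph_prods"
  shows "B \<in> graph_nts \<and> set \<alpha> \<subseteq> Inl ` graph_nts \<union> Inr ` alphabet A \<and> length \<alpha> \<le> 3"
proof -
  have init: "Inl (init A) \<in> vertices" and final: "f \<in> acc A \<Longrightarrow> Inl f \<in> vertices" for f
    using wf by (auto simp: vertices_def wf_gaut_def)
  from assms show ?thesis
    unfolding graph_prods_def
  proof (elim UnE CollectE exE conjE)
    fix f
    assume "(B, \<alpha>) = (0, [Inl (pair_nt (Inl (init A)) (Inl f))])" "f \<in> acc A"
    then show ?thesis
      using init final pair_nt_in_graph_nts by (simp add: graph_nts_def)
  next
    fix u s u' v
    assume "(B, \<alpha>) = (pair_nt u v, map Inr (list_of_option s) @ [Inl (pair_nt u' v)])"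
      and e: "edge u s None u'" and "v \<in> vertices"
    moreover have "pair_nt u v \<in> graph_nts" "pair_nt u' v \<in> graph_nts"
      using edge_vertices[OF e] \<open>v \<in> vertices\<close> by (simp_all add: pair_nt_in_graph_nts)
    ultimately show ?thesis
      using edge_label_symbols[OF e] by auto
  next
    fix u s1 x u' v' s2 v
    assume "(B, \<alpha>) = (pair_nt u v, map Inr (list_of_option s1) @ [Inl (pair_nt u' v')]
        @ map Inr (list_of_option s2))"
      and e: "edge u s1 (Some x) u'" "edge v' s2 (Some (inv_letter x)) v"
    moreover have "pair_nt u v \<in> graph_nts" "pair_nt u' v' \<in> graph_nts"
      using edge_vertices[OF e(1)] edge_vertices[OF e(2)] by (simp_all add: pair_nt_in_graph_nts)
    ultimately show ?thesis
      using edge_label_symbols[OF e(1)] edge_label_symbols[OF e(2)] by auto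
  qed (auto simp: pair_nt_in_graph_nts)
qed

lemma wf_graph_cfg: "wf_cfg graph_cfg"
  unfolding graph_cfg_def
  by (rule wf_cfgI[OF _ _ _ graph_prods_wf])
    (use wf finite_vertices in \<open>auto simp: wf_gaut_def graph_nts_def\<close>)

lemma generates_pair_nt_refl: "u \<in> vertices \<Longrightarrow> generates graph_prods [Inl (pair_nt u u)] []"
  by (rule generates_single_Inl[of _ "[]"]) (auto simp: graph_prods_def)

lemma generates_pair_nt_silent:
  assumes "edge u s None u'" "v \<in> vertices" "generates graph_prods [Inl (pair_nt u' v)] w"
  shows "generates graph_prods [Inl (pair_nt u v)] (list_of_option s @ w)"
proof (rule generates_single_Inl)
  show "(pair_nt u v, map Inr (list_of_option s) @ [Inl (pair_nt u' v)]) \<in> graph_prods"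
    using assms(1,2) unfolding graph_prods_def by blast
qed (intro generates_append generates_map_Inr assms(3))

lemma generates_pair_nt_concat:
  assumes "u \<in> vertices" "m \<in> vertices" "v \<in> vertices"
    "generates graph_prods [Inl (pair_nt u m)] w1" "generates graph_prods [Inl (pair_nt m v)] w2"
  shows "generates graph_prods [Inl (pair_nt u v)] (w1 @ w2)"
proof (rule generates_single_Inl)
  show "(pair_nt u v, [Inl (pair_nt u m), Inl (pair_nt m v)]) \<in> graph_prods"
    using assms(1-3) unfolding graph_prods_def by blast
qed (use generates_append[OF assms(4,5)] in simp)

lemma generates_pair_nt_match:
  assumes "edge u s1 (Some x) u'" "edge v' s2 (Some (inv_letter x)) v"
    "generates graph_prods [Inl (pair_nt u' v')] w"
  shows "generates graph_prods [Inl (pair_nt u v)] (list_of_option s1 @ w @ list_of_option s2)"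
proof (rule generates_single_Inl)
  show "(pair_nt u v, map Inr (list_of_option s1) @ [Inl (pair_nt u' v')] @ map Inr (list_of_option s2))
      \<in> graph_prods"
    using assms(1,2) unfolding graph_prods_def by blast
qed (intro generates_append generates_map_Inr assms(3))

lemma walk_imp_generates:
  "walk edge u w l n v \<Longrightarrow> freduce l = [] \<Longrightarrow> u \<in> vertices \<Longrightarrow> v \<in> vertices \<Longrightarrow>
    generates graph_prods [Inl (pair_nt u v)] w"
proof (induction n arbitrary: u w l v rule: less_induct)
  case (less n)
  show ?case
  proof (cases l)
    case Nil
    show ?thesis
    proof (cases n)
      case 0
      with less.prems(1) Nil have "u = v" "w = []"
        by (auto elim: walk.cases)
      with less.prems(3) show ?thesis
        by (simp add: generates_pair_nt_refl)
    next
      case (Suc n')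
      with less.prems(1) Nil obtain s u' w' where
        "edge u s None u'" "walk edge u' w' [] n' v" "w = list_of_option s @ w'"
        by (cases rule: walk.cases) (auto simp: list_of_option_def split: option.splits)
      with Suc less.IH[of n' u' w' "[]" v] less.prems(4) edge_vertices show ?thesis
        by (auto intro: generates_pair_nt_silent)
    qed
  next
    case (Cons x l')
    with less.prems(1,2) obtain w0 n0 m0 s1 u1 w1 l1 n1 v1 s2 m2 w2 l2 n2 where
      parts: "walk edge u w0 [] n0 m0" "edge m0 s1 (Some x) u1" "walk edge u1 w1 l1 n1 v1"
      "freduce l1 = []" "edge v1 s2 (Some (inv_letter x)) m2" "walk edge m2 w2 l2 n2 v" "freduce l2 = []"
      "w = w0 @ list_of_option s1 @ w1 @ list_of_option s2 @ w2" "n = Suc (Suc (n0 + n1 + n2))"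
      by (auto elim: walk_cancelling_pair)
    have V: "m0 \<in> vertices" "u1 \<in> vertices" "v1 \<in> vertices" "m2 \<in> vertices"
      using edge_vertices parts(2,5) by auto
    have gen0: "generates graph_prods [Inl (pair_nt u m0)] w0"
      using less.IH[OF _ parts(1)] parts(9) less.prems(3) V by simp
    have "generates graph_prods [Inl (pair_nt u1 v1)] w1"
      using less.IH[OF _ parts(3,4)] parts(9) V by simp
    then have gen1: "generates graph_prods [Inl (pair_nt m0 m2)] (list_of_option s1 @ w1 @ list_of_option s2)"
      using parts(2,5) by (rule generates_pair_nt_match[rotated 2])
    have gen2: "generates graph_prods [Inl (pair_nt m2 v)] w2"
      using less.IH[OF _ parts(6,7)] parts(9) less.prems(4) V by simp
    have "generates graph_prods [Inl (pair_nt u v)] (w0 @ (list_of_option s1 @ w1 @ list_of_option s2) @ w2)"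
      using less.prems(3,4) V
      by (intro generates_pair_nt_concat[OF _ _ _ gen0] generates_pair_nt_concat[OF _ _ _ gen1 gen2])
    with parts(8) show ?thesis
      by simp
  qed
qed

text \<open>For soundness, the nonterminal \<open>N\<close> of \<^const>\<open>graph_prods\<close> is read as \<^term>\<open>walk_words N\<close>.\<close>

definition walk_words :: "nat \<Rightarrow> 'a list \<Rightarrow> bool" where
  "walk_words N w \<longleftrightarrow> (N = 0 \<and> w \<in> gaut_lang F2 A)
     \<or> (\<exists>u v l n. N = pair_nt u v \<and> walk edge u w l n v \<and> freduce l = [])"

abbreviation walk_word_prods :: "(nat \<times> (nat + 'a) list) set" where
  "walk_word_prods \<equiv> {(B, map Inr u) | B u. walk_words B u}"

lemma walk_words_pair_nt:
  "walk_words (pair_nt u v) w \<longleftrightarrow> (\<exists>l n. walk edge u w l n v \<and> freduce l = [])"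
  by (auto simp: walk_words_def)

lemma graph_prods_sound:
  assumes "(B, \<gamma>) \<in> graph_prods" and "generates walk_word_prods \<gamma> w"
  shows "walk_words B w"
  using assms(1) unfolding graph_prods_def
proof (elim UnE CollectE exE conjE)
  fix f
  assume "(B, \<gamma>) = (0, [Inl (pair_nt (Inl (init A)) (Inl f))])" "f \<in> acc A"
  with assms(2) show ?thesis
    by (auto simp: generates_word_prods_Inl_iff walk_words_pair_nt walk_words_def gaut_lang_iff_walk)
next
  fix u
  assume "(B, \<gamma>) = (pair_nt u u, [])"
  with assms(2) show ?thesis
    by (auto simp: walk_words_pair_nt intro!: exI[of _ "[]"] exI[of _ 0] walk_Nil)
next
  fix u m v
  assume "(B, \<gamma>) = (pair_nt u v, [Inl (pair_nt u m), Inl (pair_nt m v)])"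
  with assms(2) obtain w1 w2 l1 n1 l2 n2 where "w = w1 @ w2"
    "walk edge u w1 l1 n1 m" "freduce l1 = []" "walk edge m w2 l2 n2 v" "freduce l2 = []"
    by (auto simp: generates_word_prods_Inl_iff walk_words_pair_nt)
  moreover from this have "freduce (l1 @ l2) = []"
    by (metis append_Nil freduce_append_left)
  ultimately show ?thesis
    using \<open>(B, \<gamma>) = _\<close> walk_append by (fastforce simp: walk_words_pair_nt)
next
  fix u s u' v
  assume "(B, \<gamma>) = (pair_nt u v, map Inr (list_of_option s) @ [Inl (pair_nt u' v)])" "edge u s None u'"
  with assms(2) obtain w' l n where "w = list_of_option s @ w'" "walk edge u' w' l n v" "freduce l = []"
    by (auto simp: generates_append_iff generates_map_Inr_iff generates_word_prods_Inl_iff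
        walk_words_pair_nt)
  with \<open>edge u s None u'\<close> \<open>(B, \<gamma>) = _\<close> show ?thesis
    using walk_Cons[of edge u s None u'] by (fastforce simp: walk_words_pair_nt)
next
  fix u s1 x u' v' s2 v
  assume B: "(B, \<gamma>) = (pair_nt u v, map Inr (list_of_option s1) @ [Inl (pair_nt u' v')]
      @ map Inr (list_of_option s2))"
    and e: "edge u s1 (Some x) u'" "edge v' s2 (Some (inv_letter x)) v"
  with assms(2) obtain w' l n where w: "w = list_of_option s1 @ w' @ list_of_option s2"
    and l: "walk edge u' w' l n v'" "freduce l = []"
    by (auto simp: generates_append_iff generates_map_Inr_iff generates_word_prods_Inl_iff
        walk_words_pair_nt)
  have "walk edge u (list_of_option s1 @ w' @ list_of_option s2) (x # l @ [inv_letter x]) (Suc (n + 1)) v"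
    using walk_Cons[OF e(1) walk_append[OF l(1) walk_edge[of edge, OF e(2)]]] by simp
  moreover have "freduce (x # l @ [inv_letter x]) = []"
    using freduce_conjugate[OF l(2), of x "[]"] by simp
  ultimately show ?thesis
    using B w by (auto simp: walk_words_pair_nt)
qed

lemma cfg_lang_graph_cfg: "cfg_lang graph_cfg = gaut_lang F2 A"
proof (rule equalityI; rule subsetI)
  fix w
  assume "w \<in> cfg_lang graph_cfg"
  then have "generates graph_prods [Inl 0] w"
    by (simp add: cfg_lang_generates graph_cfg_def)
  then have "generates walk_word_prods [Inl 0] w"
    by (rule generates_admissible) (auto simp: generates_word_prods_single intro: graph_prods_sound)
  then show "w \<in> gaut_lang F2 A"
    by (simp add: generates_word_prods_single walk_words_def)
next
  fix w
  assume "w \<in> gaut_lang F2 A"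
  then obtain f l n where f: "f \<in> acc A" "walk edge (Inl (init A)) w l n (Inl f)" "freduce l = []"
    by (auto simp: gaut_lang_iff_walk)
  moreover have "Inl (init A) \<in> vertices" "Inl f \<in> vertices"
    using wf f(1) by (auto simp: vertices_def wf_gaut_def)
  ultimately have "generates graph_prods [Inl (pair_nt (Inl (init A)) (Inl f))] w"
    by (intro walk_imp_generates)
  with f(1) have "generates graph_prods [Inl 0] w"
    by (intro generates_single_Inl) (auto simp: graph_prods_def)
  then show "w \<in> cfg_lang graph_cfg"
    by (simp add: cfg_lang_generates graph_cfg_def)
qed

end

lemma weak_linear_class_subset_CF: "weak_linear_class F2 \<Sigma> \<subseteq> CF \<Sigma>"
proof
  fix L
  assume "L \<in> weak_linear_class F2 \<Sigma>"
  then obtain A :: "(nat, 'a, f2_letter list) gaut" where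
    A: "wf_gaut F2 A" "alphabet A = \<Sigma>" "gaut_lang F2 A = L"
    by (auto simp: weak_linear_class_def)
  interpret f2_automaton A
    by unfold_locales (rule A(1))
  show "L \<in> CF \<Sigma>"
    unfolding CF_def using wf_graph_cfg cfg_lang_graph_cfg A
    by (intro CollectI exI[of _ graph_cfg]) (simp add: graph_cfg_def)
qed

section \<open>From context-free grammars to linear-time \<open>F\<^sub>2\<close>-automata\<close>

definition num_terminals :: "('n + 'a) list \<Rightarrow> nat" where
  "num_terminals \<beta> = length (filter (\<lambda>s. \<not> isl s) \<beta>)"

lemma num_terminals_simps [simp]:
  "num_terminals [] = 0" "num_terminals (Inr a # \<beta>) = Suc (num_terminals \<beta>)"
  "num_terminals (Inl B # \<beta>) = num_terminals \<beta>"
  by (simp_all add: num_terminals_def)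

lemma two_le_length_plus_num_terminals:
  assumes "\<beta> \<noteq> []" "\<forall>B. \<beta> \<noteq> [Inl B]"
  shows "2 \<le> length \<beta> + num_terminals \<beta>"
proof (cases \<beta> rule: remdups_adj.cases)
  case (2 x)
  with assms(2) obtain a where "x = Inr a"
    by (cases x) auto
  with 2 show ?thesis
    by simp
qed (use assms(1) in simp_all)

lemma drop_eq_Cons_iff: "drop j xs = y # ys \<longleftrightarrow> j < length xs \<and> xs ! j = y \<and> drop (Suc j) xs = ys"
proof
  assume drop: "drop j xs = y # ys"
  then have "j < length xs"
    by (metis drop_all list.distinct(1) not_le_imp_less)
  with drop show "j < length xs \<and> xs ! j = y \<and> drop (Suc j) xs = ys"
    by (metis Cons_nth_drop_Suc list.inject)
qed (auto simp: Cons_nth_drop_Suc)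

lemma take_drop_split:
  assumes "i \<le> j" "j \<le> k"
  shows "take (k - i) (drop i xs) = take (j - i) (drop i xs) @ take (k - j) (drop j xs)"
proof -
  have "k - i = (j - i) + (k - j)"
    using assms by simp
  then have "take (k - i) (drop i xs) = take (j - i) (drop i xs) @ take (k - j) (drop (j - i) (drop i xs))"
    by (simp only: take_add)
  also have "drop (j - i) (drop i xs) = drop j xs"
    using assms by simp
  finally show ?thesis .
qed

lemma take_drop_split_nth:
  assumes "j \<le> i" "i < k" "k \<le> length xs"
  shows "take (k - j) (drop j xs) = take (i - j) (drop j xs) @ [xs ! i] @ take (k - Suc i) (drop (Suc i) xs)"
proof -
  have "take (Suc i - i) (drop i xs) = [xs ! i]"
    using assms by (simp add: Cons_nth_drop_Suc[symmetric])
  with assms show ?thesis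
    using take_drop_split[of j i k xs] take_drop_split[of i "Suc i" k xs] by simp
qed

lemma generates_take_drop_nth:
  assumes "j \<le> i" "i < k" "k \<le> length \<beta>"
    and "generates P (take (i - j) (drop j \<beta>)) w1" "generates P [\<beta> ! i] w2"
    "generates P (take (k - Suc i) (drop (Suc i) \<beta>)) w3"
  shows "generates P (take (k - j) (drop j \<beta>)) (w1 @ w2 @ w3)"
  using generates_append[OF assms(4) generates_append[OF assms(5,6)]]
  by (simp only: take_drop_split_nth[OF assms(1-3)])

locale cfg_automaton =
  fixes G :: "(nat, 'a) cfg"
  assumes wf: "wf_cfg G"
begin

definition symbols :: "(nat + 'a) set" where
  "symbols = Inl ` nonterms G \<union> Inr ` terms G"

definition max_rhs :: nat where
  "max_rhs = (\<Sum>p\<in>prods G. length (snd p))"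

text \<open>Derived productions without \<open>\<epsilon>\<close>- and unit productions; the length bound keeps the set finite.
  Each of them reads a terminal or branches, which makes the simulating automaton linear-time.\<close>

definition proper_prods :: "(nat \<times> (nat + 'a) list) set" where
  "proper_prods = {(B, \<beta>). B \<in> nonterms G \<and> set \<beta> \<subseteq> symbols \<and> length \<beta> \<le> max_rhs \<and> \<beta> \<noteq> []
     \<and> (\<forall>C. \<beta> \<noteq> [Inl C]) \<and> (derive1 G)\<^sup>*\<^sup>* [Inl B] \<beta>}"

lemma prods_wf:
  assumes "(B, \<gamma>) \<in> prods G"
  shows "B \<in> nonterms G" "set \<gamma> \<subseteq> symbols" "length \<gamma> \<le> max_rhs"
proof -
  from assms wf have "B \<in> nonterms G \<and> (\<forall>s \<in> set \<gamma>. case s of Inl C \<Rightarrow> C \<in> nonterms G | Inr a \<Rightarrow> a \<in> terms G)"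
    unfolding wf_cfg_def by blast
  then show "B \<in> nonterms G" "set \<gamma> \<subseteq> symbols"
    unfolding symbols_def by (fastforce split: sum.splits)+
  show "length \<gamma> \<le> max_rhs"
    unfolding max_rhs_def using member_le_sum[OF assms, of "\<lambda>p. length (snd p)"] wf
    by (simp add: wf_cfg_def)
qed

lemma finite_proper_prods: "finite proper_prods"
proof (rule finite_subset)
  show "proper_prods \<subseteq> nonterms G \<times> {\<beta>. set \<beta> \<subseteq> symbols \<and> length \<beta> \<le> max_rhs}"
    by (auto simp: proper_prods_def)
  show "finite (nonterms G \<times> {\<beta>. set \<beta> \<subseteq> symbols \<and> length \<beta> \<le> max_rhs})"
    using wf by (intro finite_cartesian_product finite_lists_length_le) (auto simp: symbols_def wf_cfg_def)
qed

lemma proper_prod_of_prod: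
  assumes "(B, \<gamma>) \<in> prods G" "(derive1 G)\<^sup>*\<^sup>* \<gamma> \<beta>" "length \<beta> \<le> length \<gamma>" "set \<beta> \<subseteq> set \<gamma>"
    and "generates proper_prods \<beta> u" "u \<noteq> []"
  shows "\<exists>\<delta>. (B, \<delta>) \<in> proper_prods \<and> generates proper_prods \<delta> u"
proof -
  have B: "(derive1 G)\<^sup>*\<^sup>* [Inl B] \<beta>"
    using derive1_prod[OF assms(1), of "[]"] assms(2) by simp
  show ?thesis
  proof (cases "\<exists>C. \<beta> = [Inl C]")
    case True
    then obtain C \<delta> where "\<beta> = [Inl C]" "(C, \<delta>) \<in> proper_prods" "generates proper_prods \<delta> u"
      using assms(5) by (auto simp: generates_Inl_iff)
    with B prods_wf[OF assms(1)] show ?thesis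
      by (auto simp: proper_prods_def)
  next
    case False
    from assms(5,6) have "\<beta> \<noteq> []"
      by auto
    with False assms(3,4) B prods_wf[OF assms(1)] have "(B, \<beta>) \<in> proper_prods"
      by (auto simp: proper_prods_def)
    with assms(5) show ?thesis
      by blast
  qed
qed

text \<open>Every derivation can be compressed into one with productions from \<^const>\<open>proper_prods\<close>:
  the parts of a sentential form generating \<open>\<epsilon>\<close> are erased and chains of unit steps contracted.\<close>

lemma generates_imp_generates_proper:
  "generates (prods G) \<alpha> w \<Longrightarrow> \<exists>\<beta>. (derive1 G)\<^sup>*\<^sup>* \<alpha> \<beta> \<and> length \<beta> \<le> length \<alpha> \<and> set \<beta> \<subseteq> set \<alpha>
      \<and> generates proper_prods \<beta> w \<and> (w = [] \<longrightarrow> \<beta> = [])"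
proof (induction rule: generates.induct)
  case (generates_Inr \<alpha> w a)
  then obtain \<beta> where "(derive1 G)\<^sup>*\<^sup>* \<alpha> \<beta>" "length \<beta> \<le> length \<alpha>" "set \<beta> \<subseteq> set \<alpha>"
    "generates proper_prods \<beta> w"
    by blast
  with derives_context[of G \<alpha> \<beta> "[Inr a]" "[]"] show ?case
    by (intro exI[of _ "Inr a # \<beta>"]) (auto intro: generates.generates_Inr)
next
  case (generates_Inl B \<gamma> u \<alpha> v)
  from generates_Inl.IH(1) obtain \<beta>1 where \<beta>1: "(derive1 G)\<^sup>*\<^sup>* \<gamma> \<beta>1" "length \<beta>1 \<le> length \<gamma>"
    "set \<beta>1 \<subseteq> set \<gamma>" "generates proper_prods \<beta>1 u" "u = [] \<longrightarrow> \<beta>1 = []"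
    by blast
  from generates_Inl.IH(2) obtain \<beta>2 where \<beta>2: "(derive1 G)\<^sup>*\<^sup>* \<alpha> \<beta>2" "length \<beta>2 \<le> length \<alpha>"
    "set \<beta>2 \<subseteq> set \<alpha>" "generates proper_prods \<beta>2 v" "v = [] \<longrightarrow> \<beta>2 = []"
    by blast
  show ?case
  proof (cases "u = []")
    case True
    have "(derive1 G)\<^sup>*\<^sup>* (Inl B # \<alpha>) (\<gamma> @ \<alpha>)"
      using derive1_prod[OF generates_Inl.hyps(1)] by blast
    also have "(derive1 G)\<^sup>*\<^sup>* (\<gamma> @ \<alpha>) \<alpha>"
      using derives_context[OF \<beta>1(1), of "[]" \<alpha>] \<beta>1(5) True by simp
    also note \<beta>2(1)
    finally show ?thesis
      using \<beta>2 True by (intro exI[of _ \<beta>2]) auto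
  next
    case False
    obtain \<delta> where "(B, \<delta>) \<in> proper_prods" "generates proper_prods \<delta> u"
      using proper_prod_of_prod[OF generates_Inl.hyps(1) \<beta>1(1-4) False] by blast
    then have "generates proper_prods (Inl B # \<beta>2) (u @ v)"
      using \<beta>2(4) by (rule generates.generates_Inl)
    with derives_context[OF \<beta>2(1), of "[Inl B]" "[]"] \<beta>2(2,3) False show ?thesis
      by (intro exI[of _ "Inl B # \<beta>2"]) auto
  qed
qed simp

lemma cfg_lang_imp_proper:
  assumes "w \<in> cfg_lang G" "w \<noteq> []"
  obtains \<delta> where "(start G, \<delta>) \<in> proper_prods" "generates proper_prods \<delta> w"
proof -
  from assms(1) obtain \<gamma> where \<gamma>: "(start G, \<gamma>) \<in> prods G" "generates (prods G) \<gamma> w"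
    by (auto simp: cfg_lang_generates generates_Inl_iff)
  with generates_imp_generates_proper obtain \<beta> where "(derive1 G)\<^sup>*\<^sup>* \<gamma> \<beta>" "length \<beta> \<le> length \<gamma>"
    "set \<beta> \<subseteq> set \<gamma>" "generates proper_prods \<beta> w"
    by blast
  with proper_prod_of_prod[OF \<gamma>(1)] assms(2) that show thesis
    by blast
qed

lemma proper_imp_cfg_lang:
  assumes "(start G, \<delta>) \<in> proper_prods" "generates proper_prods \<delta> w"
  shows "w \<in> cfg_lang G"
proof -
  have "(derive1 G)\<^sup>*\<^sup>* \<delta> (map Inr w)"
    using assms(2) by (rule generates_imp_derives) (simp add: proper_prods_def)
  with assms(1) show ?thesis
    unfolding cfg_lang_def proper_prods_def by auto
qed

definition item :: "nat \<times> (nat + 'a) list \<Rightarrow> nat \<Rightarrow> nat" where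
  "item p j = Suc (Suc (to_nat (to_nat_on proper_prods p, j)))"

definition ret :: "nat \<times> (nat + 'a) list \<Rightarrow> nat \<Rightarrow> nat" where
  "ret p j = Suc (to_nat (to_nat_on proper_prods p, j))"

lemma item_eq_iff [simp]:
  "p \<in> proper_prods \<Longrightarrow> p' \<in> proper_prods \<Longrightarrow> item p j = item p' j' \<longleftrightarrow> p = p' \<and> j = j'"
  using countable_finite[OF finite_proper_prods] by (auto simp: item_def)

lemma ret_eq_iff [simp]:
  "p \<in> proper_prods \<Longrightarrow> p' \<in> proper_prods \<Longrightarrow> ret p j = ret p' j' \<longleftrightarrow> p = p' \<and> j = j'"
  using countable_finite[OF finite_proper_prods] by (auto simp: ret_def)

lemma item_neq [simp]: "item p j \<noteq> 0" "item p j \<noteq> 1" "0 \<noteq> item p j" "1 \<noteq> item p j"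
  by (simp_all add: item_def)

lemma ret_neq_0 [simp]: "ret p j \<noteq> 0" "0 \<noteq> ret p j"
  by (simp_all add: ret_def)

text \<open>A pushdown automaton for \<^const>\<open>proper_prods\<close>: state \<^term>\<open>item (B, \<beta>) j\<close> is the dotted
  production \<open>B \<rightarrow> \<beta>\<^sub>1 \<dots> \<beta>\<^sub>j \<bullet> \<beta>\<^sub>j\<^sub>+\<^sub>1 \<dots>\<close>. Its stack lives in the free group over \<open>nat\<close>:
  \<open>(c, False)\<close> pushes the return address \<open>c\<close> (\<open>0\<close> marks the bottom) and \<open>(c, True)\<close> pops it.\<close>

inductive move :: "nat \<Rightarrow> 'a option \<Rightarrow> (nat \<times> bool) option \<Rightarrow> nat \<Rightarrow> bool" where
  move_start: "(start G, \<beta>) \<in> proper_prods \<Longrightarrow> move 0 None (Some (0, False)) (item (start G, \<beta>) 0)"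
| move_read: "(B, \<beta>) \<in> proper_prods \<Longrightarrow> j < length \<beta> \<Longrightarrow> \<beta> ! j = Inr a \<Longrightarrow>
    move (item (B, \<beta>) j) (Some a) None (item (B, \<beta>) (Suc j))"
| move_call: "(B, \<beta>) \<in> proper_prods \<Longrightarrow> j < length \<beta> \<Longrightarrow> \<beta> ! j = Inl C \<Longrightarrow> (C, \<gamma>) \<in> proper_prods \<Longrightarrow>
    move (item (B, \<beta>) j) None (Some (ret (B, \<beta>) j, False)) (item (C, \<gamma>) 0)"
| move_return: "(B, \<beta>) \<in> proper_prods \<Longrightarrow> j < length \<beta> \<Longrightarrow> \<beta> ! j = Inl C \<Longrightarrow> (C, \<gamma>) \<in> proper_prods \<Longrightarrow>
    move (item (C, \<gamma>) (length \<gamma>)) None (Some (ret (B, \<beta>) j, True)) (item (B, \<beta>) (Suc j))"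
| move_accept: "(start G, \<beta>) \<in> proper_prods \<Longrightarrow>
    move (item (start G, \<beta>) (length \<beta>)) None (Some (0, True)) 1"

definition aut_states :: "nat set" where
  "aut_states = {0, 1} \<union> (\<lambda>(p, j). item p j) ` (SIGMA p : proper_prods. {..length (snd p)})"

text \<open>The empty word is never generated by \<^const>\<open>proper_prods\<close>, so the initial state accepts
  exactly when \<open>\<epsilon>\<close> is in the language.\<close>

definition cfg_aut :: "(nat, 'a, f2_letter list) gaut" where
  "cfg_aut = \<lparr>states = aut_states, alphabet = terms G, init = 0,
     acc = insert 1 (if [] \<in> cfg_lang G then {0} else {}),
     delta = (\<lambda>q s. {(q', embed_word (list_of_option lo)) | q' lo. move q s lo q'})\<rparr>"

lemma delta_cfg_aut_iff:
  "(q', m) \<in> delta cfg_aut q s \<longleftrightarrow> (\<exists>lo. move q s lo q' \<and> m = embed_word (list_of_option lo))"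
  by (auto simp: cfg_aut_def)

lemma item_in_aut_states: "p \<in> proper_prods \<Longrightarrow> j \<le> length (snd p) \<Longrightarrow> item p j \<in> aut_states"
  unfolding aut_states_def by (intro UnI2 rev_image_eqI[of "(p, j)"]) auto

lemma proper_prods_terminal:
  "(B, \<beta>) \<in> proper_prods \<Longrightarrow> j < length \<beta> \<Longrightarrow> \<beta> ! j = Inr a \<Longrightarrow> a \<in> terms G"
  using nth_mem[of j \<beta>] by (force simp: proper_prods_def symbols_def)

definition stack_letters :: "(nat \<times> bool) option set" where
  "stack_letters = insert None (Some ` (insert 0 ((\<lambda>(p, j). ret p j) ` (SIGMA p : proper_prods. {..<length (snd p)}))
     \<times> UNIV))"

lemma ret_in_stack_letters:
  "(B, \<beta>) \<in> proper_prods \<Longrightarrow> j < length \<beta> \<Longrightarrow> Some (ret (B, \<beta>) j, b) \<in> stack_letters"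
  unfolding stack_letters_def by (intro insertI2 imageI) force

lemma move_wf:
  assumes "move q s lo q'"
  shows "q \<in> aut_states" "q' \<in> aut_states" "lo \<in> stack_letters" "set (list_of_option s) \<subseteq> terms G"
  using assms
proof induction
  case (move_read B \<beta> j a)
  show "item (B, \<beta>) j \<in> aut_states" "item (B, \<beta>) (Suc j) \<in> aut_states"
    using move_read by (simp_all add: item_in_aut_states)
  show "None \<in> stack_letters" "set (list_of_option (Some a)) \<subseteq> terms G"
    using move_read proper_prods_terminal by (simp_all add: stack_letters_def)
next
  case (move_call B \<beta> j C \<gamma>)
  show "item (B, \<beta>) j \<in> aut_states" "item (C, \<gamma>) 0 \<in> aut_states"
    using move_call by (simp_all add: item_in_aut_states)
  show "Some (ret (B, \<beta>) j, False) \<in> stack_letters"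
    using move_call by (simp add: ret_in_stack_letters)
next
  case (move_return B \<beta> j C \<gamma>)
  show "item (C, \<gamma>) (length \<gamma>) \<in> aut_states" "item (B, \<beta>) (Suc j) \<in> aut_states"
    using move_return by (simp_all add: item_in_aut_states)
  show "Some (ret (B, \<beta>) j, True) \<in> stack_letters"
    using move_return by (simp add: ret_in_stack_letters)
qed (auto simp: aut_states_def stack_letters_def item_in_aut_states)

lemma delta_cfg_aut:
  "delta cfg_aut q s = (\<lambda>(q', lo). (q', embed_word (list_of_option lo))) ` {(q', lo). move q s lo q'}"
  by (auto simp: cfg_aut_def)

lemma wf_cfg_aut: "wf_gaut F2 cfg_aut"
proof -
  have "finite aut_states"
    using finite_proper_prods by (simp add: aut_states_def)
  moreover have "finite stack_letters"
    unfolding stack_letters_def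
    by (intro finite.insertI finite_imageI finite_cartesian_product finite_SigmaI finite_proper_prods
        finite_lessThan finite_UNIV)
  moreover have "{(q', lo). move q s lo q'} \<subseteq> aut_states \<times> stack_letters" for q s
    using move_wf(2,3) by blast
  ultimately have "finite {(q', lo). move q s lo q'}" for q s
    by (meson finite_SigmaI finite_subset)
  then have fin: "finite (delta cfg_aut q s)" for q s
    by (simp add: delta_cfg_aut)
  have "freduced (embed_word (list_of_option lo))" for lo :: "(nat \<times> bool) option"
    by (cases lo) (simp_all add: freduced_embed_letter)
  then have sub: "delta cfg_aut q s \<subseteq> states cfg_aut \<times> carrier F2" for q s
  proof (intro subrelI)
    fix q' m
    assume "(q', m) \<in> delta cfg_aut q s"
    then obtain lo where "move q s lo q'" "m = embed_word (list_of_option lo)"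
      by (auto simp: delta_cfg_aut_iff)
    with \<open>freduced (embed_word (list_of_option lo))\<close> show "(q', m) \<in> states cfg_aut \<times> carrier F2"
      using move_wf(2) by (simp add: cfg_aut_def carrier_F2)
  qed
  have empty: "delta cfg_aut q s = {}"
    if "\<not> (q \<in> states cfg_aut \<and> (s = None \<or> (\<exists>a \<in> alphabet cfg_aut. s = Some a)))" for q s
  proof (rule ccontr)
    assume "delta cfg_aut q s \<noteq> {}"
    then obtain q' lo where "move q s lo q'"
      by (auto simp: delta_cfg_aut)
    from move_wf(1,4)[OF this] that show False
      by (cases s) (auto simp: cfg_aut_def)
  qed
  show ?thesis
    unfolding wf_gaut_def using fin sub empty wf \<open>finite aut_states\<close>
    by (simp add: cfg_aut_def aut_states_def wf_cfg_def)
qed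

lemma comp_imp_walk_move:
  "comp F2 cfg_aut q w x n q' x' \<Longrightarrow> freduced x \<Longrightarrow>
    \<exists>l. walk move q w l n q' \<and> x' = freduce (x @ embed_word l)"
proof (induction rule: comp_induct_option)
  case (stop q x)
  then show ?case
    by (intro exI[of _ "[]"]) (simp add: freduce_freduced walk_Nil)
next
  case (step q s q1 m w x k q' x')
  then obtain lo where lo: "move q s lo q1" "m = embed_word (list_of_option lo)"
    by (auto simp: delta_cfg_aut_iff)
  from step obtain l where l: "walk move q1 w l k q'" "x' = freduce (freduce (x @ m) @ embed_word l)"
    by (auto simp: mult_F2 freduced_freduce)
  with walk_Cons[of move, OF lo(1) l(1)] lo(2) show ?case
    by (intro exI[of _ "list_of_option lo @ l"]) (simp add: freduce_append_assoc)
qed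

lemma walk_move_imp_comp:
  "walk move q w l n q' \<Longrightarrow> freduced x \<Longrightarrow> comp F2 cfg_aut q w x n q' (freduce (x @ embed_word l))"
proof (induction arbitrary: x rule: walk.induct)
  case (walk_Nil u)
  then show ?case
    by (simp add: freduce_freduced comp.stop)
next
  case (walk_Cons u s lo u' w l n v)
  have "(u', embed_word (list_of_option lo)) \<in> delta cfg_aut u s"
    using walk_Cons.hyps(1) by (auto simp: delta_cfg_aut_iff)
  moreover have "comp F2 cfg_aut u' w (x \<otimes>\<^bsub>F2\<^esub> embed_word (list_of_option lo)) n v
      (freduce (x @ embed_word (list_of_option lo @ l)))"
    using walk_Cons.IH[of "freduce (x @ embed_word (list_of_option lo))"]
    by (simp add: mult_F2 freduced_freduce freduce_append_assoc)
  ultimately show ?case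
    by (rule comp_Cons_option)
qed

lemma no_move_from_1: "\<not> move 1 s lo q"
proof
  assume "move 1 s lo q"
  then show False
    by (cases rule: move.cases) (simp_all add: item_def)
qed

lemma walk_move_from_1:
  assumes "walk move 1 w l n v"
  shows "v = 1 \<and> w = []"
  using assms by (cases rule: walk.cases) (use no_move_from_1 in auto)

lemma walk_move_silent_from_0: "walk move q w [] n v \<Longrightarrow> q = 0 \<Longrightarrow> v = 0 \<and> w = []"
  by (induction q w "[] :: (nat \<times> bool) list" n v rule: walk.induct) (auto elim: move.cases)

lemma move_target_neq_0: "move q s lo q' \<Longrightarrow> q' \<noteq> 0"
  by (induction rule: move.induct) simp_all

lemma walk_move_to_0: "walk move q w l n v \<Longrightarrow> v = 0 \<Longrightarrow> q = 0 \<and> w = []"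
  by (induction rule: walk.induct) (auto dest: move_target_neq_0)

lemma move_silent_from_item:
  assumes "move (item (B, \<beta>) j) s None q'" "(B, \<beta>) \<in> proper_prods"
  shows "\<exists>a. j < length \<beta> \<and> \<beta> ! j = Inr a \<and> s = Some a \<and> q' = item (B, \<beta>) (Suc j)"
  using assms(1)
proof (cases rule: move.cases)
  case (move_read B' \<beta>' j' a)
  with assms(2) show ?thesis
    by auto
qed

lemma walk_move_silent:
  assumes "walk move q w l n \<sigma>" "l = []" "q = item (B, \<beta>) j" "(B, \<beta>) \<in> proper_prods" "j \<le> length \<beta>"
  shows "\<exists>j'. \<sigma> = item (B, \<beta>) j' \<and> j \<le> j' \<and> j' \<le> length \<beta>
    \<and> generates proper_prods (take (j' - j) (drop j \<beta>)) w"
  using assms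
proof (induction arbitrary: j rule: walk.induct)
  case (walk_Cons u s lo u' w l n v)
  then have "lo = None" "l = []"
    by (cases lo; simp)+
  with walk_Cons obtain a where a: "j < length \<beta>" "\<beta> ! j = Inr a" "s = Some a"
    "u' = item (B, \<beta>) (Suc j)"
    using move_silent_from_item by blast
  with walk_Cons.IH[of "Suc j"] walk_Cons.prems \<open>l = []\<close> obtain j' where j': "v = item (B, \<beta>) j'"
    "Suc j \<le> j'" "j' \<le> length \<beta>" "generates proper_prods (take (j' - Suc j) (drop (Suc j) \<beta>)) w"
    by auto
  have "generates proper_prods [\<beta> ! j] [a]"
    using a(2) generates_Inr[OF generates_Nil] by simp
  with j' have "generates proper_prods (take (j' - j) (drop j \<beta>)) ([] @ [a] @ w)"
    by (intro generates_take_drop_nth) simp_all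
  with j' a show ?case
    by (intro exI[of _ j']) simp
qed (auto intro: generates_Nil)

lemma move_return_to_caller:
  assumes "move (item (C, \<gamma>) j) s (Some (ret (B, \<beta>) i, True)) q'"
    "(C, \<gamma>) \<in> proper_prods" "(B, \<beta>) \<in> proper_prods"
  shows "j = length \<gamma> \<and> s = None \<and> q' = item (B, \<beta>) (Suc i)"
  using assms(1)
proof (cases rule: move.cases)
  case (move_return B' \<beta>' i' C' \<gamma>')
  with assms(2,3) show ?thesis
    by auto
qed (use assms in auto)

lemma move_call_from_item:
  assumes "move (item (B, \<beta>) j) s (Some (ret (B, \<beta>) i, False)) q'" "(B, \<beta>) \<in> proper_prods"
  shows "j = i"
  using assms(1)
proof (cases rule: move.cases)
  case (move_call B' \<beta>' j' C \<gamma>)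
  with assms(2) show ?thesis
    by auto
qed (use assms in auto)

text \<open>The first letter pushed by a balanced walk from a dotted production is a call, and its
  cancelling partner is the matching return, one position further in the same production.\<close>

lemma walk_move_sound:
  assumes "walk move q w l n \<sigma>" "freduce l = []" "q = item (B, \<beta>) j" "(B, \<beta>) \<in> proper_prods"
    "j \<le> length \<beta>"
  shows "\<exists>j'. \<sigma> = item (B, \<beta>) j' \<and> j \<le> j' \<and> j' \<le> length \<beta>
    \<and> generates proper_prods (take (j' - j) (drop j \<beta>)) w"
  using assms
proof (induction "length l" arbitrary: B \<beta> j q w l n \<sigma> rule: less_induct)
  case less
  show ?case
  proof (cases l)
    case Nil
    with less.prems show ?thesis
      by (intro walk_move_silent) auto
  next
    case (Cons x l')
    with less.prems(1,2) obtain w0 n0 m0 s1 u1 w1 l1 n1 v1 s2 m2 w2 l2 n2 where parts: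
      "walk move q w0 [] n0 m0" "move m0 s1 (Some x) u1" "walk move u1 w1 l1 n1 v1" "freduce l1 = []"
      "move v1 s2 (Some (inv_letter x)) m2" "walk move m2 w2 l2 n2 \<sigma>" "freduce l2 = []"
      "w = w0 @ list_of_option s1 @ w1 @ list_of_option s2 @ w2" "l' = l1 @ inv_letter x # l2"
      by (auto elim: walk_cancelling_pair)
    have shorter: "length l1 < length l" "length l2 < length l"
      using Cons parts(9) by simp_all
    obtain j1 where j1: "m0 = item (B, \<beta>) j1" "j \<le> j1" "j1 \<le> length \<beta>"
      "generates proper_prods (take (j1 - j) (drop j \<beta>)) w0"
      using walk_move_silent[OF parts(1) refl less.prems(3-5)] by blast
    from parts(2) show ?thesis
    proof (cases rule: move.cases)
      case (move_call B' \<beta>' j' C \<gamma>)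
      with j1 less.prems(4) have call: "B' = B" "\<beta>' = \<beta>" "j' = j1" "x = (ret (B, \<beta>) j1, False)"
        "s1 = None" "j1 < length \<beta>" "\<beta> ! j1 = Inl C" "(C, \<gamma>) \<in> proper_prods" "u1 = item (C, \<gamma>) 0"
        by auto
      obtain j2 where j2: "v1 = item (C, \<gamma>) j2" "generates proper_prods (take j2 \<gamma>) w1"
        using less.hyps[OF shorter(1) parts(3,4) call(9,8)] by auto
      have ret: "j2 = length \<gamma>" "s2 = None" "m2 = item (B, \<beta>) (Suc j1)"
        using move_return_to_caller[of C \<gamma> j2 s2 B \<beta> j1 m2] parts(5) j2(1) call less.prems(4)
        by simp_all
      obtain j' where j': "\<sigma> = item (B, \<beta>) j'" "Suc j1 \<le> j'" "j' \<le> length \<beta>"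
        "generates proper_prods (take (j' - Suc j1) (drop (Suc j1) \<beta>)) w2"
        using less.hyps[OF shorter(2) parts(6,7) ret(3) less.prems(4)] call(6) by auto
      have "generates proper_prods [\<beta> ! j1] w1"
        using generates_single_Inl[OF call(8)] j2(2) ret(1) call(7) by simp
      with j1 j' call(6) have "generates proper_prods (take (j' - j) (drop j \<beta>)) (w0 @ w1 @ w2)"
        by (intro generates_take_drop_nth) simp_all
      with parts(8) call(5) ret(2) j' j1 show ?thesis
        by auto
    next
      case (move_return B' \<beta>' i C \<gamma>)
      with j1 less.prems(4) have "x = (ret (B', \<beta>') i, True)" "u1 = item (B', \<beta>') (Suc i)"
        "(B', \<beta>') \<in> proper_prods" "i < length \<beta>'"
        by auto
      moreover from this obtain j2 where "v1 = item (B', \<beta>') j2" "Suc i \<le> j2"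
        using less.hyps[OF shorter(1) parts(3,4)] by fastforce
      ultimately show ?thesis
        using move_call_from_item[of B' \<beta>' j2 s2 i m2] parts(5) by simp
    next
      case (move_accept \<beta>')
      then show ?thesis
        using parts(3,5) walk_move_from_1 no_move_from_1 by blast
    qed (use j1 in auto)
  qed
qed

lemma walk_move_accepting:
  assumes "walk move 0 w l n 1" "freduce l = []"
  shows "w \<in> cfg_lang G"
proof (cases l)
  case Nil
  with assms(1) show ?thesis
    using walk_move_silent_from_0 by fastforce
next
  case (Cons x l')
  with assms obtain w0 n0 m0 s1 u1 w1 l1 n1 v1 s2 m2 w2 l2 n2 where parts:
    "walk move 0 w0 [] n0 m0" "move m0 s1 (Some x) u1" "walk move u1 w1 l1 n1 v1" "freduce l1 = []"
    "move v1 s2 (Some (inv_letter x)) m2" "walk move m2 w2 l2 n2 1"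
    "w = w0 @ list_of_option s1 @ w1 @ list_of_option s2 @ w2"
    by (auto elim: walk_cancelling_pair)
  have "m0 = 0" "w0 = []"
    using walk_move_silent_from_0[OF parts(1)] by simp_all
  from parts(2)[unfolded \<open>m0 = 0\<close>] show ?thesis
  proof (cases rule: move.cases)
    case (move_start \<beta>)
    obtain j2 where j2: "v1 = item (start G, \<beta>) j2" "generates proper_prods (take j2 \<beta>) w1"
      using walk_move_sound[OF parts(3,4)] move_start by fastforce
    from parts(5) have "j2 = length \<beta> \<and> s2 = None \<and> m2 = 1"
    proof (cases rule: move.cases)
      case (move_accept \<beta>')
      with j2(1) move_start show ?thesis
        by auto
    qed (use move_start j2 in auto)
    with walk_move_from_1 parts(6) have "w2 = []"
      by blast
    with \<open>j2 = length \<beta> \<and> s2 = None \<and> m2 = 1\<close> parts(7) j2(2) move_start \<open>w0 = []\<close> show ?thesis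
      by (auto intro: proper_imp_cfg_lang)
  qed auto
qed

text \<open>The potential \<open>2 |\<alpha>| + 2 \<cdot> #terminals(\<alpha>)\<close> pays for the steps: a terminal costs one step and
  reads one letter; a nonterminal costs a call and a return, paid by the potential of its
  production, which is at least \<open>4\<close>.\<close>

lemma generates_proper_imp_walk_move:
  assumes "generates proper_prods \<alpha> w" "(B, \<beta>) \<in> proper_prods" "j \<le> length \<beta>" "drop j \<beta> = \<alpha>"
  shows "\<exists>l n. walk move (item (B, \<beta>) j) w l n (item (B, \<beta>) (length \<beta>)) \<and> freduce l = []
    \<and> n + 2 * length \<alpha> + 2 * num_terminals \<alpha> \<le> 5 * length w"
  using assms
proof (induction arbitrary: B \<beta> j rule: generates.induct)
  case generates_Nil
  then have "j = length \<beta>"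
    by simp
  then show ?case
    by (intro exI[of _ "[]"] exI[of _ 0]) (auto intro: walk_Nil)
next
  case (generates_Inr \<alpha> w a)
  then have j: "j < length \<beta>" "\<beta> ! j = Inr a" "drop (Suc j) \<beta> = \<alpha>"
    by (simp_all add: drop_eq_Cons_iff)
  then obtain l n where l: "walk move (item (B, \<beta>) (Suc j)) w l n (item (B, \<beta>) (length \<beta>))"
    "freduce l = []" "n + 2 * length \<alpha> + 2 * num_terminals \<alpha> \<le> 5 * length w"
    using generates_Inr.IH[OF generates_Inr.prems(1), of "Suc j"] by auto
  have "walk move (item (B, \<beta>) j) (a # w) l (Suc n) (item (B, \<beta>) (length \<beta>))"
    using walk_Cons[OF move_read[OF generates_Inr.prems(1) j(1,2)] l(1)] by simp
  with l(2,3) show ?case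
    by (intro exI[of _ l] exI[of _ "Suc n"]) simp
next
  case (generates_Inl C \<gamma> u \<alpha> v)
  then have j: "j < length \<beta>" "\<beta> ! j = Inl C" "drop (Suc j) \<beta> = \<alpha>"
    by (simp_all add: drop_eq_Cons_iff)
  obtain l1 n1 where l1: "walk move (item (C, \<gamma>) 0) u l1 n1 (item (C, \<gamma>) (length \<gamma>))"
    "freduce l1 = []" "n1 + 2 * length \<gamma> + 2 * num_terminals \<gamma> \<le> 5 * length u"
    using generates_Inl.IH(1)[OF generates_Inl.hyps(1), of 0] by auto
  obtain l2 n2 where l2: "walk move (item (B, \<beta>) (Suc j)) v l2 n2 (item (B, \<beta>) (length \<beta>))"
    "freduce l2 = []" "n2 + 2 * length \<alpha> + 2 * num_terminals \<alpha> \<le> 5 * length v"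
    using generates_Inl.IH(2)[OF generates_Inl.prems(1), of "Suc j"] j by auto
  let ?c = "(ret (B, \<beta>) j, False)"
  have "walk move (item (B, \<beta>) j) (u @ v) (?c # l1 @ inv_letter ?c # l2) (Suc (n1 + Suc n2))
      (item (B, \<beta>) (length \<beta>))"
    using walk_Cons[OF move_call[OF generates_Inl.prems(1) j(1,2) generates_Inl.hyps(1)]
        walk_append[OF l1(1) walk_Cons[OF move_return[OF generates_Inl.prems(1) j(1,2)
        generates_Inl.hyps(1)] l2(1)]]]
    by simp
  moreover have "freduce (?c # l1 @ inv_letter ?c # l2) = []"
    using freduce_conjugate[OF l1(2), of ?c l2] l2(2) by (simp only:)
  moreover have "2 \<le> length \<gamma> + num_terminals \<gamma>"
    using generates_Inl.hyps(1) two_le_length_plus_num_terminals by (auto simp: proper_prods_def)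
  ultimately show ?case
    using l1(3) l2(3) by (intro exI[of _ "?c # l1 @ inv_letter ?c # l2"] exI[of _ "Suc (n1 + Suc n2)"]) simp
qed

lemma cfg_lang_imp_accepts_in:
  assumes "w \<in> cfg_lang G"
  shows "\<exists>n \<le> 5 * length w + 2. accepts_in F2 cfg_aut w n"
proof (cases "w = []")
  case True
  with assms show ?thesis
    by (auto simp: accepts_in_def cfg_aut_def one_F2 intro: comp.stop)
next
  case False
  with assms obtain \<beta> where \<beta>: "(start G, \<beta>) \<in> proper_prods" "generates proper_prods \<beta> w"
    by (auto elim: cfg_lang_imp_proper)
  then obtain l n where l: "walk move (item (start G, \<beta>) 0) w l n (item (start G, \<beta>) (length \<beta>))"
    "freduce l = []" "n + 2 * length \<beta> + 2 * num_terminals \<beta> \<le> 5 * length w"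
    using generates_proper_imp_walk_move[OF \<beta>(2,1), of 0] by auto
  let ?l = "(0, False) # l @ [(0, True)]"
  have "walk move 0 w ?l (Suc (n + 1)) 1"
    using walk_Cons[OF move_start[OF \<beta>(1)] walk_append[OF l(1) walk_edge[of move, OF move_accept[OF \<beta>(1)]]]]
    by simp
  moreover have "freduce ?l = []"
    using freduce_conjugate[OF l(2), of "(0, False)" "[]"] by simp
  then have "freduce (embed_word ?l) = []"
    by (simp only: freduce_embed_word_Nil_iff)
  ultimately have "comp F2 cfg_aut 0 w [] (Suc (n + 1)) 1 []"
    using walk_move_imp_comp[of 0 w ?l _ 1 "[]"] by simp
  then have "accepts_in F2 cfg_aut w (Suc (n + 1))"
    by (simp add: accepts_in_def cfg_aut_def one_F2)
  with l(3) show ?thesis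
    by (intro exI[of _ "Suc (n + 1)"]) simp
qed

lemma gaut_lang_cfg_aut: "gaut_lang F2 cfg_aut = cfg_lang G"
proof (rule equalityI; rule subsetI)
  fix w
  assume "w \<in> gaut_lang F2 cfg_aut"
  then obtain k f where f: "f \<in> acc cfg_aut" "comp F2 cfg_aut 0 w [] k f []"
    by (auto simp: gaut_lang_def accepts_in_def one_F2 cfg_aut_def)
  then obtain l where "walk move 0 w l k f" "freduce (embed_word l) = []"
    using comp_imp_walk_move[of 0 w "[]"] by force
  then have walk: "walk move 0 w l k f" "freduce l = []"
    by (simp_all add: freduce_embed_word_Nil_iff)
  show "w \<in> cfg_lang G"
  proof (cases "f = 1")
    case True
    with walk show ?thesis
      by (simp add: walk_move_accepting)
  next
    case False
    with f(1) have "f = 0" "[] \<in> cfg_lang G"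
      by (auto simp: cfg_aut_def split: if_splits)
    with walk_move_to_0[OF walk(1)] show ?thesis
      by simp
  qed
next
  fix w
  assume "w \<in> cfg_lang G"
  then show "w \<in> gaut_lang F2 cfg_aut"
    using cfg_lang_imp_accepts_in by (auto simp: gaut_lang_def)
qed

lemma weakly_time_bounded_cfg_aut: "weakly_time_bounded F2 cfg_aut (\<lambda>n. 5 * n + 2)"
  unfolding weakly_time_bounded_def gaut_lang_cfg_aut using cfg_lang_imp_accepts_in by blast

end

lemma linear_in_bigo: "(\<lambda>n. real (a * n + b)) \<in> O(\<lambda>n. real n)"
proof (rule bigoI[of _ "a + b"])
  have "real (a * n + b) \<le> real (a + b) * real n" if "1 \<le> n" for n
  proof -
    have "real b * 1 \<le> real b * real n"
      using that by (intro mult_left_mono) simp_all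
    then show ?thesis
      by (simp add: algebra_simps)
  qed
  then show "\<forall>\<^sub>F n in at_top. norm (real (a * n + b)) \<le> real (a + b) * norm (real n)"
    unfolding eventually_at_top_linorder by auto
qed

lemma CF_subset_weak_linear_class: "CF \<Sigma> \<subseteq> weak_linear_class F2 \<Sigma>"
proof
  fix L
  assume "L \<in> CF \<Sigma>"
  then obtain G :: "(nat, 'a) cfg" where G: "wf_cfg G" "terms G = \<Sigma>" "cfg_lang G = L"
    by (auto simp: CF_def)
  interpret cfg_automaton G
    by unfold_locales (rule G(1))
  have "alphabet cfg_aut = \<Sigma>"
    using G(2) by (simp add: cfg_aut_def)
  then show "L \<in> weak_linear_class F2 \<Sigma>"
    unfolding weak_linear_class_def
    using wf_cfg_aut gaut_lang_cfg_aut weakly_time_bounded_cfg_aut linear_in_bigo[of 5 2] G(3)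
    by (intro CollectI exI[of _ cfg_aut] exI[of _ "\<lambda>n. 5 * n + 2"] conjI) simp_all
qed

theorem theorem4p6:
  fixes \<Sigma> :: "'a set"
  assumes "finite \<Sigma>"
  shows "weak_linear_class F2 \<Sigma> = CF \<Sigma>"
  using weak_linear_class_subset_CF CF_subset_weak_linear_class by blast

end
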